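(* Let $V$ be a locally free sheaf of rank $\alpha$ on $\mathbb{P}^1$, let $D=\sum_{i=1}^r m_i c_i$ be a positive divisor on $\mathbb{P}^1$ with support $C=\{c_1,\dots,c_r\}$, and let $\nabla: V\to \Omega^1_{\mathbb{P}^1}(D)\otimes_{\mathcal{O}_{\mathbb{P}^1}} V$ be an irreducible meromorphic connection on $V$ with pole divisor $D$. Let $\omega$ be a non-zero global meromorphic section of $V$ whose poles lie in $C\cup\{\infty\}$. Then: (1) the sections $\{\nabla^i\omega \mid i=0,1,2,\ldots\}$ generate (span) every fiber $V_b$, $b\in\mathbb{P}^1\setminus (C\cup\{\infty\})$; (2) the sections $\{\nabla^i\omega\mid i=0,1,\ldots,\alpha-1\}$ generate a generic fiber $V_b$.
   Context: A meromorphic connection on $V$ with pole divisor $D$ is a $\mathbb{C}$-linear sheaf map $\nabla: V\to \Omega^1_{\mathbb{P}^1}(D)\otimes V$ with $\nabla(f\omega)=df\otimes\omega+f\nabla\omega$, where $\Omega^1_{\mathbb{P}^1}(D)$ is the sheaf of meromorphic $1$-forms with poles only at the $c_i$, of order bounded by $m_i$ at $c_i$. Let $t$ be the affine coordinate on $\mathbb{C}=\mathbb{P}^1\setminus\{\infty\}$; here $\nabla\omega$ denotes $\nabla_{\partial/\partial t}\omega$ (compose $\nabla$ with the vector field $\partial/\partial t$), which maps global meromorphic sections of $V$ with poles in $C\cup\{\infty\}$ to such sections, and $\nabla^i$ is its $i$-fold iterate. For $b\notin C$, there is a local frame of flat sections ($\nabla e=0$) near $b$; analytic continuation along loops in $\mathbb{P}^1\setminus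 C$ gives the monodromy representation $T:\pi_1(\mathbb{P}^1\setminus C,b)\to GL(V_b)$. $\nabla$ is called irreducible if the orbit under the monodromy of any non-zero element of $V_b$ spans $V_b$. *)

theory Defs
  imports "HOL-Complex_Analysis.Complex_Analysis" "HOL-Computational_Algebra.Polynomial"
begin

text \<open>V restricted to the affine line is trivialised by a (rational) frame; in this frame
  nabla_{d/dt} = d/dt + A(t), with A a matrix of rational functions whose poles lie in the
  finite part C of the polar set. Sections are vectors of rational functions.\<close>

definition rational_on :: "complex set \<Rightarrow> (complex \<Rightarrow> complex) \<Rightarrow> bool" where
  "rational_on S f \<longleftrightarrow> (\<exists>p q. \<forall>t\<in>S. poly q t \<noteq> 0 \<and> f t = poly p t / poly q t)"

definition rational_vec_on :: "complex set \<Rightarrow> (complex \<Rightarrow> complex^'n) \<Rightarrow> bool" where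
  "rational_vec_on S w \<longleftrightarrow> (\<forall>i. rational_on S (\<lambda>t. w t $ i))"

definition rational_mat_on :: "complex set \<Rightarrow> (complex \<Rightarrow> complex^'n^'n) \<Rightarrow> bool" where
  "rational_mat_on S A \<longleftrightarrow> (\<forall>i j. rational_on S (\<lambda>t. A t $ i $ j))"

definition conn :: "(complex \<Rightarrow> complex^'n^'n) \<Rightarrow> (complex \<Rightarrow> complex^'n) \<Rightarrow> complex \<Rightarrow> complex^'n" where
  "conn A w = (\<lambda>t. (\<chi> i. deriv (\<lambda>s. w s $ i) t) + A t *v w t)"

definition flat_on :: "(complex \<Rightarrow> complex^'n^'n) \<Rightarrow> complex set \<Rightarrow> (complex \<Rightarrow> complex^'n) \<Rightarrow> bool" where
  "flat_on A U y \<longleftrightarrow> (\<forall>i. (\<lambda>s. y s $ i) holomorphic_on U) \<and> (\<forall>t\<in>U. conn A y t = 0)"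

text \<open>Y is an analytic continuation of a flat section along the path g (parametrised on [0,1]):
  locally near every parameter s, Y is given by a flat section on a disc around g s.\<close>
definition flat_along :: "(complex \<Rightarrow> complex^'n^'n) \<Rightarrow> complex set \<Rightarrow> (real \<Rightarrow> complex) \<Rightarrow> (real \<Rightarrow> complex^'n) \<Rightarrow> bool" where
  "flat_along A C g Y \<longleftrightarrow>
     (\<forall>s\<in>{0..1}. \<exists>e>0. ball (g s) e \<subseteq> - C \<and>
        (\<exists>y. flat_on A (ball (g s) e) y \<and>
             (\<exists>d>0. \<forall>s'\<in>{0..1}. \<bar>s' - s\<bar> < d \<longrightarrow> g s' \<in> ball (g s) e \<and> Y s' = y (g s'))))"

definition monodromy_orbit :: "(complex \<Rightarrow> complex^'n^'n) \<Rightarrow> complex set \<Rightarrow> complex \<Rightarrow> complex^'n \<Rightarrow> (complex^'n) set" where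
  "monodromy_orbit A C b v = {Y 1 | g Y. path g \<and> pathstart g = b \<and> pathfinish g = b \<and>
      path_image g \<subseteq> - C \<and> flat_along A C g Y \<and> Y 0 = v}"

definition irreducible_conn :: "(complex \<Rightarrow> complex^'n^'n) \<Rightarrow> complex set \<Rightarrow> bool" where
  "irreducible_conn A C \<longleftrightarrow>
     (\<exists>b. b \<notin> C \<and> (\<forall>v. v \<noteq> 0 \<longrightarrow> vec.span (monodromy_orbit A C b v) = UNIV))"

end

theory Submission
  imports Defs
begin

text \<open>
  Pair sections of \<open>V\<close> with flat sections \<open>\<psi>\<close> of the dual connection by the bilinear pairing
  \<open>\<langle>c, v\<rangle> = \<Sum>\<^sub>i c\<^sub>i v\<^sub>i\<close>; then \<open>\<langle>\<psi>, w\<rangle>' = \<langle>\<psi>, \<nabla>w\<rangle>\<close>. By the identity theorem, a vector \<open>c\<close> is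
  orthogonal to all \<open>\<nabla>\<^sup>k\<omega>(t)\<close> iff the dual flat section through \<open>c\<close> annihilates \<open>\<omega>\<close> near \<open>t\<close>.
  Consequently the span \<open>U\<^sub>t\<close> of the \<open>\<nabla>\<^sup>k\<omega>(t)\<close> is preserved by monodromy (along a loop, the
  pairing of a flat section with such an annihilator is locally constant), and if \<open>U\<^sub>t\<close> is a
  proper subspace at one point then it is so at every point of the connected set
  \<open>\<complex> - C\<close>. As \<open>\<omega> \<noteq> 0\<close> forces \<open>U\<^sub>t \<noteq> 0\<close>, irreducibility gives \<open>U\<^sub>t = V\<^sub>t\<close>: this is (1).

  For (2), the determinant of \<open>\<omega>, \<dots>, \<nabla>\<^sup>\<alpha>\<^sup>-\<^sup>1\<omega>\<close> is rational, so it suffices that it does not vanish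
  identically. Otherwise take the least \<open>k\<close> such that \<open>\<omega>, \<dots>, \<nabla>\<^sup>k\<omega>\<close> are dependent everywhere. Near
  a point where \<open>\<omega>, \<dots>, \<nabla>\<^sup>k\<^sup>-\<^sup>1\<omega>\<close> are independent, Cramer's rule writes \<open>\<nabla>\<^sup>k\<omega>\<close> as a
  holomorphic combination of them, hence by the Leibniz rule so is every \<open>\<nabla>\<^sup>m\<omega>\<close>, and
  \<open>dim U\<^sub>t \<le> k < \<alpha>\<close> contradicts (1).
\<close>

no_notation fps_nth (infixl \<open>$\<close> 75)

section \<open>Linear holomorphic differential equations\<close>

lemma norm_vec_le_card_mult:
  assumes "\<And>i. norm ((x::'a::real_normed_vector^'n)$i) \<le> a"
  shows "norm x \<le> real CARD('n) * a"
proof -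
  have "norm x \<le> (\<Sum>i\<in>UNIV. norm (x$i))"
    by (simp add: norm_vec_def L2_set_le_sum)
  also have "\<dots> \<le> (\<Sum>i\<in>(UNIV::'n set). a)"
    by (rule sum_mono) (use assms in auto)
  finally show ?thesis by simp
qed

lemma matrix_vector_mult_bounded_on_compact:
  fixes B :: "complex \<Rightarrow> complex^'n^'n"
  assumes cont: "\<And>i j. continuous_on K (\<lambda>t. B t $ i $ j)" and "compact K"
  shows "\<exists>L\<ge>0. \<forall>t\<in>K. \<forall>v i. norm ((B t *v v)$i) \<le> L * norm v"
proof -
  have "\<exists>M. \<forall>t\<in>K. norm (B t $ i $ j) \<le> M" for i j
    using compact_imp_bounded[OF compact_continuous_image[OF cont \<open>compact K\<close>]]
    by (auto simp: bounded_iff)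
  then obtain M where M: "\<And>i j t. t \<in> K \<Longrightarrow> norm (B t $ i $ j) \<le> M i j" by metis
  define L where "L = (\<Sum>i\<in>UNIV. \<Sum>j\<in>UNIV. max 0 (M i j))"
  have "norm ((B t *v v)$i) \<le> L * norm v" if "t \<in> K" for t v i
  proof -
    have "norm ((B t *v v)$i) \<le> (\<Sum>j\<in>UNIV. norm (B t $ i $ j * v $ j))"
      unfolding matrix_vector_mult_def by (simp add: norm_sum)
    also have "\<dots> \<le> (\<Sum>j\<in>UNIV. max 0 (M i j) * norm v)"
      by (intro sum_mono)
        (use M[OF that] Finite_Cartesian_Product.norm_nth_le[of v]
          in \<open>auto simp: norm_mult le_max_iff_disj intro!: mult_mono\<close>)
    also have "\<dots> \<le> L * norm v"
      unfolding L_def sum_distrib_right[symmetric]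
      by (intro mult_right_mono member_le_sum) (auto intro: sum_nonneg)
    finally show ?thesis .
  qed
  moreover have "L \<ge> 0" unfolding L_def by (intro sum_nonneg) auto
  ultimately show ?thesis by blast
qed

lemma holomorphic_primitive_vanishing_at:
  assumes "f holomorphic_on D" "open D" "convex D" "t1 \<in> D"
  shows "\<exists>F. (\<forall>x\<in>D. (F has_field_derivative f x) (at x)) \<and> F t1 = 0"
proof -
  obtain g where g: "\<And>x. x \<in> D \<Longrightarrow> (g has_field_derivative f x) (at x within D)"
    using holomorphic_convex_primitive'[OF \<open>convex D\<close> \<open>open D\<close> assms(1)] by blast
  have "(g has_field_derivative f x) (at x)" if "x \<in> D" for x
    using g[OF that] at_within_open[OF that \<open>open D\<close>] by simp
  then show ?thesis
    by (intro exI[of _ "\<lambda>x. g x - g t1"]) (auto intro!: derivative_eq_intros)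
qed

definition solves_ode :: "(complex \<Rightarrow> complex^'n^'n) \<Rightarrow> complex set \<Rightarrow> (complex \<Rightarrow> complex^'n) \<Rightarrow> bool"
  where "solves_ode B D y \<longleftrightarrow>
    (\<forall>t\<in>D. \<forall>i. ((\<lambda>s. y s $ i) has_field_derivative (B t *v y t) $ i) (at t))"

definition ode_solvable_on :: "(complex \<Rightarrow> complex^'n^'n) \<Rightarrow> complex set \<Rightarrow> bool"
  where "ode_solvable_on B D \<longleftrightarrow> (\<forall>t1\<in>D. \<forall>c. \<exists>y. solves_ode B D y \<and> y t1 = c)"

lemma solves_ode_holomorphic:
  "solves_ode B D y \<Longrightarrow> open D \<Longrightarrow> (\<lambda>t. y t $ i) holomorphic_on D"
  unfolding solves_ode_def holomorphic_on_open by blast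

lemma solves_ode_subset: "solves_ode B D y \<Longrightarrow> D' \<subseteq> D \<Longrightarrow> solves_ode B D' y"
  unfolding solves_ode_def by blast

lemma ode_solvable_on_subset: "ode_solvable_on B D \<Longrightarrow> D' \<subseteq> D \<Longrightarrow> ode_solvable_on B D'"
  unfolding ode_solvable_on_def using solves_ode_subset by blast

lemma solves_ode_zero: "solves_ode B D (\<lambda>t. 0)"
  unfolding solves_ode_def by auto

lemma solves_ode_diff:
  "solves_ode B D y \<Longrightarrow> solves_ode B D z \<Longrightarrow> solves_ode B D (\<lambda>t. y t - z t)"
  unfolding solves_ode_def
  by (auto simp: matrix_vector_mult_diff_distrib intro!: derivative_eq_intros)

lemma primitive_contraction:
  fixes B :: "complex \<Rightarrow> complex^'n^'n"
  assumes "convex D" "t1 \<in> D" "t \<in> D"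
    and G: "\<And>x i. x \<in> D \<Longrightarrow> ((\<lambda>s. G s $ i) has_field_derivative (B x *v z x) $ i) (at x)"
    and "G t1 = 0"
    and z: "\<And>x. x \<in> D \<Longrightarrow> norm (z x) \<le> K"
    and B: "\<And>x v i. x \<in> D \<Longrightarrow> norm ((B x *v v)$i) \<le> L * norm v" "L \<ge> 0"
    and diam: "\<And>x. x \<in> D \<Longrightarrow> norm (x - t1) \<le> d"
    and small: "real CARD('n) * (L * d) \<le> 1/2"
  shows "norm (G t) \<le> K / 2"
proof -
  have "K \<ge> 0" using z[OF \<open>t1 \<in> D\<close>] norm_ge_zero order_trans by blast
  have "norm (G t $ i) \<le> L * K * d" for i
  proof -
    have "norm (G t $ i - G t1 $ i) \<le> L * K * norm (t - t1)"
    proof (rule field_differentiable_bound[OF \<open>convex D\<close>])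
      show "((\<lambda>s. G s $ i) has_field_derivative (B x *v z x) $ i) (at x within D)" if "x \<in> D" for x
        using G[OF that] by (rule has_field_derivative_at_within)
      show "norm ((B x *v z x) $ i) \<le> L * K" if "x \<in> D" for x
        using B(1)[OF that, of "z x"] z[OF that] \<open>L \<ge> 0\<close>
        by (meson mult_left_mono order_trans)
    qed (use assms in auto)
    also have "\<dots> \<le> L * K * d"
      using diam[OF \<open>t \<in> D\<close>] \<open>L \<ge> 0\<close> \<open>K \<ge> 0\<close> by (simp add: mult_left_mono)
    finally show ?thesis using \<open>G t1 = 0\<close> by simp
  qed
  then have "norm (G t) \<le> real CARD('n) * (L * K * d)"
    by (rule norm_vec_le_card_mult)
  also have "\<dots> = (real CARD('n) * (L * d)) * K" by simp
  also have "\<dots> \<le> 1/2 * K" using small \<open>K \<ge> 0\<close> by (rule mult_right_mono)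
  finally show ?thesis by simp
qed

lemma uniform_limit_of_geometric_differences:
  fixes y :: "nat \<Rightarrow> 'a \<Rightarrow> 'b::banach"
  assumes "\<And>n t. t \<in> D \<Longrightarrow> norm (y (Suc n) t - y n t) \<le> M * q ^ n" "0 \<le> q" "q < 1"
  shows "\<exists>Y. uniform_limit D y Y sequentially"
proof -
  define Y where "Y t = y 0 t + (\<Sum>j. y (Suc j) t - y j t)" for t
  have "summable (\<lambda>j. M * q ^ j)"
    using assms(2,3) by (intro summable_mult summable_geometric) simp
  then have "uniform_limit D (\<lambda>n t. \<Sum>j<n. y (Suc j) t - y j t) (\<lambda>t. \<Sum>j. y (Suc j) t - y j t) sequentially"
    by (rule Weierstrass_m_test[rotated]) (use assms(1) in blast)
  then have "uniform_limit D (\<lambda>n t. y 0 t + (\<Sum>j<n. y (Suc j) t - y j t)) Y sequentially"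
    unfolding Y_def by (intro uniform_limit_intros) auto
  moreover have "y 0 t + (\<Sum>j<n. y (Suc j) t - y j t) = y n t" for n t
    using sum_lessThan_telescope[of "\<lambda>j. y j t" n] by simp
  ultimately show ?thesis by auto
qed

text \<open>Complex derivatives pass to locally uniform limits.\<close>

lemma solves_ode_uniform_limit:
  fixes B :: "complex \<Rightarrow> complex^'n^'n"
  assumes "open D"
    and dy: "\<And>n x i. x \<in> D \<Longrightarrow> ((\<lambda>s. y (Suc n) s $ i) has_field_derivative (B x *v y n x) $ i) (at x)"
    and lim: "uniform_limit D y Y sequentially"
  shows "solves_ode B D Y"
  unfolding solves_ode_def
proof (intro ballI allI)
  fix t i assume t: "t \<in> D"
  have lim_i: "uniform_limit D (\<lambda>n s. y (Suc n) s $ i) (\<lambda>s. Y s $ i) sequentially"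
    using filterlim_compose[OF bounded_linear.uniform_limit[OF bounded_linear_vec_nth lim] filterlim_Suc] .
  have "\<exists>g'. \<forall>x\<in>D. ((\<lambda>s. Y s $ i) has_field_derivative g' x) (at x) \<and>
             ((\<lambda>n. (B x *v y n x) $ i) \<longlongrightarrow> g' x) sequentially"
  proof (rule has_complex_derivative_uniform_sequence[OF \<open>open D\<close> dy])
    fix x assume "x \<in> D"
    then obtain e where "e > 0" "cball x e \<subseteq> D"
      using \<open>open D\<close> open_contains_cball by blast
    then show "\<exists>d>0. cball x d \<subseteq> D \<and>
        uniform_limit (cball x d) (\<lambda>n s. y (Suc n) s $ i) (\<lambda>s. Y s $ i) sequentially"
      using uniform_limit_on_subset[OF lim_i] by blast
  qed
  then obtain g' where g': "((\<lambda>s. Y s $ i) has_field_derivative g' t) (at t)"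
    "((\<lambda>n. (B t *v y n t) $ i) \<longlongrightarrow> g' t) sequentially" using t by blast
  have "((\<lambda>n. (B t *v y n t) $ i) \<longlongrightarrow> (B t *v Y t) $ i) sequentially"
    using tendsto_uniform_limitI[OF lim t]
    by (intro bounded_linear.tendsto[OF bounded_linear_compose[OF bounded_linear_vec_nth
          matrix_vector_mul_bounded_linear]])
  with g' show "((\<lambda>s. Y s $ i) has_field_derivative (B t *v Y t) $ i) (at t)"
    using LIMSEQ_unique by metis
qed

definition picard_iterates ::
  "(complex \<Rightarrow> complex^'n^'n) \<Rightarrow> complex set \<Rightarrow> complex \<Rightarrow> complex^'n \<Rightarrow>
    (nat \<Rightarrow> complex \<Rightarrow> complex^'n) \<Rightarrow> bool"
  where "picard_iterates B D t1 c y \<longleftrightarrow> y 0 = (\<lambda>_. c) \<and> (\<forall>m. y (Suc m) t1 = c) \<and>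
    (\<forall>m x i. x \<in> D \<longrightarrow> ((\<lambda>s. y (Suc m) s $ i) has_field_derivative (B x *v y m x) $ i) (at x))"

lemma picard_iterates_exist:
  fixes B :: "complex \<Rightarrow> complex^'n^'n"
  assumes D: "open D" "convex D" "t1 \<in> D" and hol: "\<And>i j. (\<lambda>t. B t $ i $ j) holomorphic_on D"
  shows "\<exists>y. picard_iterates B D t1 c y"
proof -
  obtain prim where prim: "\<And>f. f holomorphic_on D \<Longrightarrow>
      (\<forall>x\<in>D. (prim f has_field_derivative f x) (at x)) \<and> prim f t1 = 0"
    using holomorphic_primitive_vanishing_at[OF _ D] by metis
  define y :: "nat \<Rightarrow> complex \<Rightarrow> complex^'n" where
    "y = rec_nat (\<lambda>t. c) (\<lambda>_ z t. c + (\<chi> i. prim (\<lambda>s. (B s *v z s) $ i) t))"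
  have y_Suc: "y (Suc m) t = c + (\<chi> i. prim (\<lambda>s. (B s *v y m s) $ i) t)" for m t
    by (simp add: y_def)
  have "(\<lambda>s. y m s $ i) holomorphic_on D \<and>
      (\<forall>x\<in>D. ((\<lambda>s. y (Suc m) s $ i) has_field_derivative (B x *v y m x) $ i) (at x)) \<and>
      y (Suc m) t1 $ i = c $ i" for m i
  proof (induction m arbitrary: i)
    case 0
    have "(\<lambda>s. (B s *v c) $ j) holomorphic_on D" for j
      unfolding matrix_vector_mult_def using hol by (auto intro!: holomorphic_intros)
    then show ?case
      using prim by (auto simp: y_Suc y_def intro!: derivative_eq_intros)
  next
    case (Suc m)
    then have hol_m: "(\<lambda>s. y (Suc m) s $ i) holomorphic_on D" for i
      using holomorphic_on_open[OF \<open>open D\<close>] by blast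
    then have "(\<lambda>s. (B s *v y (Suc m) s) $ j) holomorphic_on D" for j
      unfolding matrix_vector_mult_def using hol by (auto intro!: holomorphic_intros)
    then show ?case
      using prim hol_m by (auto simp: y_Suc intro!: derivative_eq_intros)
  qed
  then show ?thesis
    unfolding picard_iterates_def by (intro exI[of _ y]) (auto simp: y_def vec_eq_iff)
qed

lemma picard_iterates_differences:
  fixes B :: "complex \<Rightarrow> complex^'n^'n"
  assumes y: "picard_iterates B D t1 c y" and D: "convex D" "t1 \<in> D" "t \<in> D"
    and bnd: "\<And>t v i. t \<in> D \<Longrightarrow> norm ((B t *v v)$i) \<le> L * norm v" "L \<ge> 0"
    and diam: "\<And>t. t \<in> D \<Longrightarrow> norm (t - t1) \<le> d"
    and small: "real CARD('n) * (L * d) \<le> 1/2"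
  shows "norm (y (Suc m) t - y m t) \<le> norm c * (1/2) ^ Suc m"
  using \<open>t \<in> D\<close>
proof (induction m arbitrary: t)
  case 0
  have "norm (y (Suc 0) t - y 0 t) \<le> norm c / 2"
  proof (rule primitive_contraction[OF D(1,2) 0 _ _ _ bnd diam small])
    show "((\<lambda>s. (y (Suc 0) s - y 0 s) $ i) has_field_derivative (B x *v c) $ i) (at x)"
      if "x \<in> D" for x i
      using y that unfolding picard_iterates_def by (auto intro!: derivative_eq_intros)
  qed (use y in \<open>auto simp: picard_iterates_def\<close>)
  then show ?case by simp
next
  case (Suc m)
  have "norm (y (Suc (Suc m)) t - y (Suc m) t) \<le> norm c * (1/2) ^ Suc m / 2"
  proof (rule primitive_contraction[OF D(1,2) Suc.prems _ _ Suc.IH bnd diam small])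
    show "((\<lambda>s. (y (Suc (Suc m)) s - y (Suc m) s) $ i) has_field_derivative
        (B x *v (y (Suc m) x - y m x)) $ i) (at x)" if "x \<in> D" for x i
      using y that unfolding picard_iterates_def
      by (auto simp: matrix_vector_mult_diff_distrib intro!: derivative_eq_intros)
  qed (use y in \<open>simp add: picard_iterates_def\<close>)
  then show ?case by simp
qed

lemma ode_exists_contracting:
  fixes B :: "complex \<Rightarrow> complex^'n^'n"
  assumes D: "open D" "convex D" "t1 \<in> D"
    and hol: "\<And>i j. (\<lambda>t. B t $ i $ j) holomorphic_on D"
    and bnd: "\<And>t v i. t \<in> D \<Longrightarrow> norm ((B t *v v)$i) \<le> L * norm v" "L \<ge> 0"
    and diam: "\<And>t. t \<in> D \<Longrightarrow> norm (t - t1) \<le> d"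
    and small: "real CARD('n) * (L * d) \<le> 1/2"
  shows "\<exists>y. solves_ode B D y \<and> y t1 = c"
proof -
  obtain y where y: "picard_iterates B D t1 c y"
    using picard_iterates_exist[OF D hol] by blast
  have "norm (y (Suc n) t - y n t) \<le> norm c / 2 * (1/2) ^ n" if "t \<in> D" for n t
    using picard_iterates_differences[OF y D(2,3) that bnd diam small, of n] by simp
  then obtain Y where lim: "uniform_limit D y Y sequentially"
    using uniform_limit_of_geometric_differences[of D y "norm c / 2" "1/2"] by auto
  have "(\<lambda>n. y n t1) \<longlonglongrightarrow> c"
    by (rule LIMSEQ_imp_Suc) (use y in \<open>simp add: picard_iterates_def\<close>)
  then have "Y t1 = c"
    using LIMSEQ_unique tendsto_uniform_limitI[OF lim \<open>t1 \<in> D\<close>] by blast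
  moreover have "solves_ode B D Y"
    using y unfolding picard_iterates_def by (intro solves_ode_uniform_limit[OF \<open>open D\<close> _ lim]) blast
  ultimately show ?thesis by blast
qed

lemma ode_small_ball:
  fixes B :: "complex \<Rightarrow> complex^'n^'n"
  assumes "open S" and hol: "\<And>i j. (\<lambda>t. B t $ i $ j) holomorphic_on S" and "t0 \<in> S"
  shows "\<exists>r>0. \<exists>L\<ge>0. ball t0 r \<subseteq> S \<and> (\<forall>t\<in>ball t0 r. \<forall>v i. norm ((B t *v v)$i) \<le> L * norm v)
           \<and> real CARD('n) * (L * (2 * r)) \<le> 1/2"
proof -
  obtain r0 where r0: "r0 > 0" "cball t0 r0 \<subseteq> S"
    using \<open>open S\<close> \<open>t0 \<in> S\<close> open_contains_cball by blast
  have "continuous_on (cball t0 r0) (\<lambda>t. B t $ i $ j)" for i j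
    using holomorphic_on_imp_continuous_on[OF hol] continuous_on_subset r0(2) by blast
  then obtain L where L: "L \<ge> 0" "\<And>t v i. t \<in> cball t0 r0 \<Longrightarrow> norm ((B t *v v)$i) \<le> L * norm v"
    using matrix_vector_mult_bounded_on_compact[OF _ compact_cball] by metis
  define N where "N = real CARD('n)"
  define r where "r = min r0 (1 / (4 * N * L + 1))"
  have "0 \<le> 4 * N * L"
    using L(1) by (simp add: N_def)
  then have den: "4 * N * L + 1 > 0" by linarith
  have "r > 0" using r0 den by (simp add: r_def)
  moreover have "N * (L * (2 * r)) \<le> 1/2"
  proof -
    have "r \<le> 1 / (4 * N * L + 1)" by (simp add: r_def)
    then have "(4 * N * L + 1) * r \<le> 1"
      using den by (simp add: field_simps)
    then show ?thesis using \<open>r > 0\<close> by (simp add: algebra_simps)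
  qed
  moreover have "ball t0 r \<subseteq> cball t0 r0" by (auto simp: r_def)
  ultimately show ?thesis
    using L r0(2) unfolding N_def by blast
qed

lemma ode_solvable_near:
  fixes B :: "complex \<Rightarrow> complex^'n^'n"
  assumes "open S" "\<And>i j. (\<lambda>t. B t $ i $ j) holomorphic_on S" "t0 \<in> S"
  shows "\<exists>r>0. ball t0 r \<subseteq> S \<and> ode_solvable_on B (ball t0 r)"
proof -
  obtain r L where r: "r > 0" "L \<ge> 0" "ball t0 r \<subseteq> S"
    and bnd: "\<And>t v i. t \<in> ball t0 r \<Longrightarrow> norm ((B t *v v)$i) \<le> L * norm v"
    and small: "real CARD('n) * (L * (2 * r)) \<le> 1/2"
    using ode_small_ball[OF assms] by blast
  have "\<exists>y. solves_ode B (ball t0 r) y \<and> y t1 = c" if t1: "t1 \<in> ball t0 r" for t1 c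
  proof (rule ode_exists_contracting[OF open_ball convex_ball t1 _ bnd r(2) _ small])
    show "(\<lambda>t. B t $ i $ j) holomorphic_on ball t0 r" for i j
      using holomorphic_on_subset[OF assms(2) r(3)] .
    show "norm (t - t1) \<le> 2 * r" if "t \<in> ball t0 r" for t
      using that t1 dist_triangle_less_add[of t t0 r t1 r]
      by (simp add: dist_norm norm_minus_commute dist_commute)
  qed
  with r show ?thesis unfolding ode_solvable_on_def by blast
qed

lemma eq_0_if_norm_le_halvings:
  fixes x :: "'a::real_normed_vector"
  assumes "\<And>m. norm x \<le> K / 2 ^ m"
  shows "x = 0"
proof -
  have "norm x \<le> 0"
    by (rule LIMSEQ_le_const[OF LIMSEQ_divide_realpow_zero[of 2 K]]) (use assms in auto)
  then show ?thesis by simp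
qed

text \<open>A solution vanishing at a point is, near that point, a fixed point of the contracting
  Picard step, hence zero.\<close>

lemma solves_ode_zero_near:
  fixes B :: "complex \<Rightarrow> complex^'n^'n"
  assumes "open W" "\<And>i j. (\<lambda>t. B t $ i $ j) holomorphic_on W"
    and sol: "solves_ode B W y" and t1: "t1 \<in> W" "y t1 = 0"
  shows "\<exists>\<rho>>0. ball t1 \<rho> \<subseteq> W \<and> (\<forall>t\<in>ball t1 \<rho>. y t = 0)"
proof -
  obtain r L where r: "r > 0" "L \<ge> 0" "ball t1 r \<subseteq> W"
    and bnd: "\<And>t v i. t \<in> ball t1 r \<Longrightarrow> norm ((B t *v v)$i) \<le> L * norm v"
    and small: "real CARD('n) * (L * (2 * r)) \<le> 1/2"
    using ode_small_ball[OF assms(1,2) t1(1)] by blast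
  define \<rho> where "\<rho> = r / 2"
  have sub: "cball t1 \<rho> \<subseteq> ball t1 r" "ball t1 \<rho> \<subseteq> ball t1 r"
    using r(1) by (auto simp: \<rho>_def)
  have "continuous_on (cball t1 \<rho>) y"
    using solves_ode_holomorphic[OF sol \<open>open W\<close>] sub(1) r(3)
    by (intro continuous_on_vec_lambda[where f = "\<lambda>i t. y t $ i", simplified]
        holomorphic_on_imp_continuous_on) (meson holomorphic_on_subset order_trans)
  then have "bounded (y ` cball t1 \<rho>)"
    by (intro compact_imp_bounded compact_continuous_image compact_cball)
  then obtain K where K: "\<And>t. t \<in> cball t1 \<rho> \<Longrightarrow> norm (y t) \<le> K"
    unfolding bounded_iff by blast
  have bound: "norm (y t) \<le> K / 2 ^ m" if "t \<in> ball t1 \<rho>" for m t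
    using that
  proof (induction m arbitrary: t)
    case 0
    then show ?case using K by simp
  next
    case (Suc m)
    have "norm (y t) \<le> (K / 2 ^ m) / 2"
    proof (rule primitive_contraction[where D = "ball t1 \<rho>" and G = y and z = y,
          OF convex_ball _ Suc.prems _ t1(2) Suc.IH _ r(2) _ small])
      show "((\<lambda>s. y s $ i) has_field_derivative (B x *v y x) $ i) (at x)" if "x \<in> ball t1 \<rho>" for x i
        using sol that sub(2) r(3) unfolding solves_ode_def by blast
      show "norm (x - t1) \<le> 2 * r" if "x \<in> ball t1 \<rho>" for x
        using that r(1) by (simp add: \<rho>_def dist_norm norm_minus_commute)
    qed (use bnd sub r in \<open>auto simp: \<rho>_def\<close>)
    then show ?case by simp
  qed
  have "y t = 0" if "t \<in> ball t1 \<rho>" for t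
    using bound[OF that] by (rule eq_0_if_norm_le_halvings)
  moreover have "\<rho> > 0" "ball t1 \<rho> \<subseteq> W"
    using r sub by (auto simp: \<rho>_def)
  ultimately show ?thesis by blast
qed

lemma solves_ode_unique:
  fixes B :: "complex \<Rightarrow> complex^'n^'n"
  assumes W: "open W" "connected W" and hol: "\<And>i j. (\<lambda>t. B t $ i $ j) holomorphic_on W"
    and y: "solves_ode B W y" and z: "solves_ode B W z" and "t1 \<in> W" "y t1 = z t1" "t \<in> W"
  shows "y t = z t"
proof -
  have sol: "solves_ode B W (\<lambda>t. y t - z t)" by (rule solves_ode_diff[OF y z])
  obtain \<rho> where \<rho>: "\<rho> > 0" "ball t1 \<rho> \<subseteq> W" "\<And>s. s \<in> ball t1 \<rho> \<Longrightarrow> y s - z s = 0"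
    using solves_ode_zero_near[OF W(1) hol sol \<open>t1 \<in> W\<close>] \<open>y t1 = z t1\<close> by auto
  have "y t $ i - z t $ i = 0" for i
    using analytic_continuation_open[where f = "\<lambda>s. y s $ i - z s $ i" and g = "\<lambda>_. 0",
        OF open_ball W(1) _ W(2) \<rho>(2) _ _ _ \<open>t \<in> W\<close>]
      solves_ode_holomorphic[OF sol W(1)] \<rho>(1,3) by (simp add: vec_eq_iff)
  then show ?thesis by (simp add: vec_eq_iff)
qed

section \<open>Rational sections and the operator \<open>\<nabla>\<close>\<close>

lemma rational_on_const: "rational_on S (\<lambda>t. c)"
  unfolding rational_on_def by (intro exI[of _ "[:c:]"] exI[of _ 1]) simp

lemma rational_on_add:
  assumes "rational_on S f" "rational_on S g"
  shows "rational_on S (\<lambda>t. f t + g t)"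
proof -
  obtain p1 q1 p2 q2 where
    "\<And>t. t \<in> S \<Longrightarrow> poly q1 t \<noteq> 0 \<and> f t = poly p1 t / poly q1 t"
    "\<And>t. t \<in> S \<Longrightarrow> poly q2 t \<noteq> 0 \<and> g t = poly p2 t / poly q2 t"
    using assms unfolding rational_on_def by metis
  then have "\<forall>t\<in>S. poly (q1 * q2) t \<noteq> 0 \<and> f t + g t = poly (p1 * q2 + p2 * q1) t / poly (q1 * q2) t"
    by (simp add: field_simps)
  then show ?thesis unfolding rational_on_def by blast
qed

lemma rational_on_mult:
  assumes "rational_on S f" "rational_on S g"
  shows "rational_on S (\<lambda>t. f t * g t)"
proof -
  obtain p1 q1 p2 q2 where
    "\<And>t. t \<in> S \<Longrightarrow> poly q1 t \<noteq> 0 \<and> f t = poly p1 t / poly q1 t"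
    "\<And>t. t \<in> S \<Longrightarrow> poly q2 t \<noteq> 0 \<and> g t = poly p2 t / poly q2 t"
    using assms unfolding rational_on_def by metis
  then have "\<forall>t\<in>S. poly (q1 * q2) t \<noteq> 0 \<and> f t * g t = poly (p1 * p2) t / poly (q1 * q2) t"
    by simp
  then show ?thesis unfolding rational_on_def by blast
qed

lemma rational_on_sum:
  "finite I \<Longrightarrow> (\<And>i. i \<in> I \<Longrightarrow> rational_on S (f i)) \<Longrightarrow> rational_on S (\<lambda>t. \<Sum>i\<in>I. f i t)"
  by (induction I rule: finite_induct) (auto intro: rational_on_const rational_on_add)

lemma rational_on_prod:
  "finite I \<Longrightarrow> (\<And>i. i \<in> I \<Longrightarrow> rational_on S (f i)) \<Longrightarrow> rational_on S (\<lambda>t. \<Prod>i\<in>I. f i t)"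
  by (induction I rule: finite_induct) (auto intro: rational_on_const rational_on_mult)

lemma rational_on_det:
  fixes M :: "complex \<Rightarrow> complex^'n^'n"
  assumes "\<And>i j. rational_on S (\<lambda>t. M t $ i $ j)"
  shows "rational_on S (\<lambda>t. det (M t))"
  unfolding det_def
  by (intro rational_on_sum rational_on_mult rational_on_prod rational_on_const) (auto intro: assms)

lemma rational_on_holomorphic:
  assumes "open S" "rational_on S f"
  shows "f holomorphic_on S"
proof -
  obtain p q where pq: "\<And>t. t \<in> S \<Longrightarrow> poly q t \<noteq> 0 \<and> f t = poly p t / poly q t"
    using assms(2) unfolding rational_on_def by blast
  have "(\<lambda>t. poly p t / poly q t) holomorphic_on S"
    using pq by (auto intro!: holomorphic_intros)
  then show ?thesis by (rule holomorphic_transform) (use pq in auto)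
qed

lemma rational_on_deriv:
  assumes "open S" "rational_on S f"
  shows "rational_on S (deriv f)"
proof -
  obtain p q where pq: "\<And>t. t \<in> S \<Longrightarrow> poly q t \<noteq> 0 \<and> f t = poly p t / poly q t"
    using assms(2) unfolding rational_on_def by blast
  have "deriv f t = poly (pderiv p * q - p * pderiv q) t / poly (q * q) t" if t: "t \<in> S" for t
  proof -
    have "((\<lambda>x. poly p x / poly q x) has_field_derivative
        (poly (pderiv p) t * poly q t - poly p t * poly (pderiv q) t) / (poly q t * poly q t)) (at t)"
      using pq[OF t] by (intro DERIV_divide poly_DERIV) auto
    then have "(f has_field_derivative
        (poly (pderiv p) t * poly q t - poly p t * poly (pderiv q) t) / (poly q t * poly q t)) (at t)"
      by (rule has_field_derivative_transform_within_open[OF _ \<open>open S\<close> t]) (use pq in auto)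
    then show ?thesis by (simp add: DERIV_imp_deriv)
  qed
  with pq show ?thesis unfolding rational_on_def by (metis poly_mult mult_eq_0_iff)
qed

lemma rational_on_zeros_finite:
  assumes "rational_on S f" "t0 \<in> S" "f t0 \<noteq> 0"
  shows "finite {t\<in>S. f t = 0}"
proof -
  obtain p q where pq: "\<And>t. t \<in> S \<Longrightarrow> poly q t \<noteq> 0 \<and> f t = poly p t / poly q t"
    using assms(1) unfolding rational_on_def by blast
  have "p \<noteq> 0" using pq[OF assms(2)] assms(3) by auto
  then have "finite {t. poly p t = 0}" by (rule poly_roots_finite)
  then show ?thesis by (rule rev_finite_subset) (use pq in auto)
qed

lemma conn_component:
  "conn A w t $ i = deriv (\<lambda>s. w s $ i) t + (\<Sum>j\<in>UNIV. A t $ i $ j * w t $ j)"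
  by (simp add: conn_def matrix_vector_mult_def)

lemma conn_cong_open:
  assumes "open N" "t \<in> N" "\<And>s. s \<in> N \<Longrightarrow> w s = w' s"
  shows "conn A w t = conn A w' t"
proof -
  have "deriv (\<lambda>s. w s $ i) t = deriv (\<lambda>s. w' s $ i) t" for i
    by (intro deriv_cong_ev) (use eventually_nhds_in_open[OF assms(1,2)] assms(3) in
        \<open>auto elim!: eventually_mono\<close>)
  then show ?thesis using assms(2,3) by (simp add: conn_def)
qed

lemma rational_vec_on_conn:
  assumes "open S" "rational_mat_on S A" "rational_vec_on S w"
  shows "rational_vec_on S (conn A w)"
  using assms
  unfolding rational_vec_on_def rational_mat_on_def conn_component
  by (auto intro!: rational_on_add rational_on_deriv rational_on_sum rational_on_mult)

lemma rational_vec_on_conn_funpow: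
  "open S \<Longrightarrow> rational_mat_on S A \<Longrightarrow> rational_vec_on S w \<Longrightarrow> rational_vec_on S ((conn A ^^ m) w)"
  by (induction m) (auto intro: rational_vec_on_conn)

lemma conn_sum_scale:
  assumes "open N" "t \<in> N" "finite I"
    and c: "\<And>i. i \<in> I \<Longrightarrow> c i holomorphic_on N"
    and w: "\<And>i j. i \<in> I \<Longrightarrow> (\<lambda>s. w i s $ j) holomorphic_on N"
  shows "conn A (\<lambda>s. \<Sum>i\<in>I. c i s *s w i s) t =
         (\<Sum>i\<in>I. deriv (c i) t *s w i t + c i t *s conn A (w i) t)"
proof -
  have "conn A (\<lambda>s. \<Sum>i\<in>I. c i s *s w i s) t $ j =
        (\<Sum>i\<in>I. deriv (c i) t *s w i t + c i t *s conn A (w i) t) $ j" for j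
  proof -
    have "((\<lambda>s. \<Sum>i\<in>I. c i s * w i s $ j) has_field_derivative
          (\<Sum>i\<in>I. c i t * deriv (\<lambda>s. w i s $ j) t + deriv (c i) t * w i t $ j)) (at t)"
      using holomorphic_derivI[OF c \<open>open N\<close> \<open>t \<in> N\<close>] holomorphic_derivI[OF w \<open>open N\<close> \<open>t \<in> N\<close>]
      by (intro DERIV_sum DERIV_mult') (auto simp: at_within_open[OF \<open>t \<in> N\<close> \<open>open N\<close>])
    then have "deriv (\<lambda>s. (\<Sum>i\<in>I. c i s *s w i s) $ j) t =
          (\<Sum>i\<in>I. c i t * deriv (\<lambda>s. w i s $ j) t + deriv (c i) t * w i t $ j)"
      by (simp add: DERIV_imp_deriv sum_component)
    moreover have "(\<Sum>l\<in>UNIV. A t $ j $ l * (\<Sum>i\<in>I. c i t *s w i t) $ l) =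
          (\<Sum>i\<in>I. c i t * (\<Sum>l\<in>UNIV. A t $ j $ l * w i t $ l))"
      by (simp add: sum_component sum_distrib_left mult_ac sum.swap[of _ UNIV])
    ultimately show ?thesis
      by (simp add: conn_component sum_component sum.distrib algebra_simps)
  qed
  then show ?thesis by (simp add: vec_eq_iff)
qed

section \<open>Linear algebra\<close>

definition pairing :: "'a::comm_semiring_1^'n \<Rightarrow> 'a^'n \<Rightarrow> 'a" where
  "pairing c v = (\<Sum>i\<in>UNIV. c $ i * v $ i)"

lemma pairing_axis: "pairing c (axis i 1) = c $ i"
proof -
  have "pairing c (axis i 1) = (\<Sum>j\<in>UNIV. if j = i then c $ j else 0)"
    unfolding pairing_def by (rule sum.cong) (auto simp: axis_def)
  then show ?thesis by simp
qed

lemma pairing_commute: "pairing c v = pairing v (c :: 'a::comm_semiring_1^'n)"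
  by (simp add: pairing_def mult.commute)

lemma pairing_zero_left [simp]: "pairing 0 v = 0"
  by (simp add: pairing_def)

lemma pairing_zero_right [simp]: "pairing c 0 = 0"
  by (simp add: pairing_def)

lemma pairing_add_right: "pairing c (v + w) = pairing c v + pairing c w"
  unfolding pairing_def by (simp add: distrib_left sum.distrib)

lemma pairing_scale_right: "pairing c (a *s v) = a * pairing c v"
proof -
  have "c $ i * (a * v $ i) = a * (c $ i * v $ i)" for i
    by (rule mult.left_commute)
  then show ?thesis by (simp add: pairing_def sum_distrib_left)
qed

lemma pairing_vanishes_on_span:
  fixes c :: "complex^'n"
  assumes "\<And>v. v \<in> S \<Longrightarrow> pairing c v = 0" "w \<in> vec.span S"
  shows "pairing c w = 0"
proof -
  have "vec.subspace {v. pairing c v = 0}"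
    unfolding vec.subspace_def by (simp add: pairing_add_right pairing_scale_right)
  then have "vec.span S \<subseteq> {v. pairing c v = 0}"
    using assms(1) by (intro vec.span_minimal) auto
  then show ?thesis using assms(2) by blast
qed

lemma separating_pairing:
  fixes w :: "complex^'n"
  assumes "vec.subspace S" "w \<notin> S"
  shows "\<exists>c. (\<forall>v\<in>S. pairing c v = 0) \<and> pairing c w \<noteq> 0"
proof -
  obtain B where B: "B \<subseteq> S" "vec.independent B" "S \<subseteq> vec.span B"
    by (rule vec.basis_exists[of S])
  have "w \<notin> vec.span B"
    using vec.span_minimal[OF B(1) assms(1)] assms(2) by blast
  then have indep: "vec.independent (insert w B)"
    using B(2) by (rule vec.independent_insertI)
  define B' where "B' = vec.extend_basis (insert w B)"
  have B': "insert w B \<subseteq> B'" "vec.independent B'" "\<And>v. v \<in> vec.span B'"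
    unfolding B'_def using vec.extend_basis_superset vec.independent_extend_basis indep by auto
  define f where "f v = vec.representation B' v w" for v
  define c where "c = (\<chi> i. f (axis i 1))"
  have "f v = pairing c v" for v
  proof -
    have "f v = f (\<Sum>i\<in>UNIV. v $ i *s axis i 1)" by (simp add: basis_expansion)
    also have "\<dots> = (\<Sum>i\<in>UNIV. v $ i * f (axis i 1))"
      unfolding f_def by (simp add: vec.representation_sum[OF B'(2,3)] vec.representation_scale[OF B'(2,3)])
    finally show ?thesis by (simp add: pairing_def c_def mult.commute)
  qed
  moreover have "f v = 0" if "v \<in> S" for v
  proof -
    have "vec.representation B' v = vec.representation B v"
      using B(3) that B'(1) by (intro vec.representation_extend[OF B'(2)]) auto
    then show ?thesis
      unfolding f_def using vec.representation_ne_zero[of B v w] \<open>w \<notin> vec.span B\<close>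
        vec.span_base[of w B] by auto
  qed
  moreover have "f w = 1"
    unfolding f_def using vec.representation_basis[OF B'(2)] B'(1) by simp
  ultimately show ?thesis by force
qed

lemma in_span_if_annihilated:
  fixes w :: "complex^'n"
  assumes "\<And>c. (\<forall>v\<in>S. pairing c v = 0) \<Longrightarrow> pairing c w = 0"
  shows "w \<in> vec.span S"
  using separating_pairing[OF vec.subspace_span, of w S] assms vec.span_base by blast

lemma span_eq_UNIV_iff_no_annihilator:
  fixes S :: "(complex^'n) set"
  shows "vec.span S = UNIV \<longleftrightarrow> (\<forall>c. (\<forall>v\<in>S. pairing c v = 0) \<longrightarrow> c = 0)"
proof
  assume span: "vec.span S = UNIV"
  show "\<forall>c. (\<forall>v\<in>S. pairing c v = 0) \<longrightarrow> c = 0"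
    using pairing_vanishes_on_span[of S _ "axis _ 1"] by (simp add: span pairing_axis vec_eq_iff)
next
  assume "\<forall>c. (\<forall>v\<in>S. pairing c v = 0) \<longrightarrow> c = 0"
  then show "vec.span S = UNIV"
    using in_span_if_annihilated[of S] by fastforce
qed

lemma det_rows_ne_0_iff_span:
  fixes f :: "'n \<Rightarrow> 'a::field^'n"
  shows "det (\<chi> i. f i) \<noteq> 0 \<longleftrightarrow> vec.span (range f) = UNIV"
proof -
  have "rows (\<chi> i. f i) = range f" by (auto simp: rows_def row_def)
  then show ?thesis
    by (simp flip: invertible_det_nz add: invertible_left_inverse matrix_left_invertible_span_rows_gen)
qed

lemma det_rows_ne_0_iff_independent:
  fixes f :: "'n \<Rightarrow> 'a::field^'n"
  shows "det (\<chi> i. f i) \<noteq> 0 \<longleftrightarrow> (\<forall>c. (\<Sum>i\<in>UNIV. c i *s f i) = 0 \<longrightarrow> (\<forall>i. c i = 0))"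
  by (simp flip: invertible_det_nz add: invertible_right_inverse
      matrix_right_invertible_independent_rows row_def)

definition cramer_solution :: "'a::field^'n^'n \<Rightarrow> 'a^'n \<Rightarrow> 'a^'n" where
  "cramer_solution M b = (\<chi> k. det (\<chi> i j. if j = k then b $ i else M $ i $ j) / det M)"

lemma cramer_solution_unique:
  "det M \<noteq> 0 \<Longrightarrow> M *v x = b \<longleftrightarrow> x = cramer_solution M b"
  unfolding cramer_solution_def by (rule cramer)

lemma holomorphic_det:
  fixes M :: "complex \<Rightarrow> complex^'n^'n"
  assumes "\<And>i j. (\<lambda>t. M t $ i $ j) holomorphic_on S"
  shows "(\<lambda>t. det (M t)) holomorphic_on S"
  unfolding det_def by (intro holomorphic_intros assms)

lemma holomorphic_cramer_solution:
  fixes M :: "complex \<Rightarrow> complex^'n^'n"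
  assumes "\<And>i j. (\<lambda>t. M t $ i $ j) holomorphic_on S" "\<And>i. (\<lambda>t. b t $ i) holomorphic_on S"
    and "\<And>t. t \<in> S \<Longrightarrow> det (M t) \<noteq> 0"
  shows "(\<lambda>t. cramer_solution (M t) (b t) $ k) holomorphic_on S"
proof -
  have "(\<lambda>t. (\<chi> i j. if j = k then b t $ i else M t $ i $ j) $ i $ j) holomorphic_on S" for i j
    by (cases "j = k") (simp_all add: assms)
  then show ?thesis
    unfolding cramer_solution_def using assms by (auto intro!: holomorphic_intros holomorphic_det)
qed

text \<open>Unlike \<open>vec.independent\<close> of the image set, this counts repeated members.\<close>

definition independent_prefix :: "nat \<Rightarrow> (nat \<Rightarrow> 'a::field^'n) \<Rightarrow> bool" where
  "independent_prefix k v \<longleftrightarrow> (\<forall>a. (\<Sum>i<k. a i *s v i) = 0 \<longrightarrow> (\<forall>i<k. a i = 0))"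

lemma independent_prefix_0 [simp]: "independent_prefix 0 v"
  by (simp add: independent_prefix_def)

lemma independent_prefix_inj_on:
  fixes v :: "nat \<Rightarrow> 'a::field^'n"
  assumes "independent_prefix k v"
  shows "inj_on v {..<k}"
proof (rule inj_onI, rule ccontr)
  fix i j assume ij: "i \<in> {..<k}" "j \<in> {..<k}" "v i = v j" "i \<noteq> j"
  define a :: "nat \<Rightarrow> 'a" where "a l = (if l = i then 1 else if l = j then - 1 else 0)" for l
  have "(\<Sum>l<k. a l *s v l) = (\<Sum>l\<in>{i, j}. a l *s v l)"
    using ij by (intro sum.mono_neutral_right) (auto simp: a_def)
  also have "\<dots> = 0" using ij by (simp add: a_def)
  finally have "a i = 0" using assms ij unfolding independent_prefix_def by blast
  then show False by (simp add: a_def)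
qed

lemma independent_prefix_imp_independent:
  assumes "independent_prefix k v"
  shows "vec.independent (v ` {..<k})"
  unfolding vec.dependent_finite[OF finite_imageI[OF finite_lessThan]]
proof
  assume "\<exists>u. (\<exists>w\<in>v ` {..<k}. u w \<noteq> 0) \<and> (\<Sum>w\<in>v ` {..<k}. u w *s w) = 0"
  then obtain u w where u: "(\<Sum>w\<in>v ` {..<k}. u w *s w) = 0" and w: "w \<in> v ` {..<k}" "u w \<noteq> 0"
    by blast
  have "(\<Sum>i<k. u (v i) *s v i) = 0 \<longrightarrow> (\<forall>i<k. u (v i) = 0)"
    using assms unfolding independent_prefix_def by (rule spec[where x = "\<lambda>i. u (v i)"])
  moreover have "(\<Sum>i<k. u (v i) *s v i) = 0"
    using u sum.reindex[OF independent_prefix_inj_on[OF assms], of "\<lambda>w. u w *s w"] by simp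
  ultimately have "\<forall>i<k. u (v i) = 0" by blast
  with w show False by auto
qed

lemma dependent_Suc_imp_combination:
  assumes "independent_prefix k v" "\<not> independent_prefix (Suc k) v"
  shows "\<exists>\<beta>. v k = (\<Sum>i<k. \<beta> i *s v i)"
proof -
  obtain a where a: "(\<Sum>i<Suc k. a i *s v i) = 0" "\<exists>i<Suc k. a i \<noteq> 0"
    using assms(2) unfolding independent_prefix_def by blast
  have "a k \<noteq> 0"
    using a assms(1) less_Suc_eq unfolding independent_prefix_def by auto
  define \<beta> where "\<beta> i = - a i / a k" for i
  have "a k *s (\<Sum>i<k. \<beta> i *s v i) = (\<Sum>i<k. (- a i) *s v i)"
    unfolding vec.scale_sum_right
    by (rule sum.cong) (use \<open>a k \<noteq> 0\<close> in \<open>simp_all add: \<beta>_def vector_smult_assoc\<close>)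
  also have "\<dots> = a k *s v k"
    using a(1) by (simp add: sum_negf neg_eq_iff_add_eq_0 add.commute)
  finally have "v k = (\<Sum>i<k. \<beta> i *s v i)"
    using \<open>a k \<noteq> 0\<close> by simp
  then show ?thesis by blast
qed

lemma independent_prefix_iff_det:
  fixes v :: "nat \<Rightarrow> 'a::field^'n"
  assumes h: "bij_betw h (UNIV::'n set) {..<CARD('n)}"
  shows "independent_prefix CARD('n) v \<longleftrightarrow> det (\<chi> j. v (h j)) \<noteq> 0"
proof -
  have reindex: "(\<Sum>i<CARD('n). a i *s v i) = (\<Sum>j\<in>UNIV. a (h j) *s v (h j))" for a
    by (rule sum.reindex_bij_betw[OF h, symmetric])
  have surj: "\<exists>j. i = h j" if "i < CARD('n)" for i
    using that bij_betw_imp_surj_on[OF h] by auto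
  show ?thesis
    unfolding det_rows_ne_0_iff_independent independent_prefix_def
  proof safe
    fix c j
    assume indep: "\<forall>a. (\<Sum>i<CARD('n). a i *s v i) = 0 \<longrightarrow> (\<forall>i<CARD('n). a i = 0)"
      and "(\<Sum>j\<in>UNIV. c j *s v (h j)) = 0"
    then have "(\<Sum>i<CARD('n). (c \<circ> inv_into UNIV h) i *s v i) = 0"
      unfolding reindex using bij_betw_inv_into_left[OF h] by simp
    then have "(c \<circ> inv_into UNIV h) (h j) = 0"
      using indep bij_betw_apply[OF h] by blast
    then show "c j = 0"
      using bij_betw_inv_into_left[OF h] by simp
  next
    fix a i
    assume indep: "\<forall>c. (\<Sum>j\<in>UNIV. c j *s v (h j)) = 0 \<longrightarrow> (\<forall>j. c j = 0)"
      and "(\<Sum>i<CARD('n). a i *s v i) = 0" "i < CARD('n)"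
    then have "\<forall>j. a (h j) = 0"
      using indep[rule_format, of "\<lambda>j. a (h j)"] unfolding reindex by blast
    then show "a i = 0"
      using surj[OF \<open>i < CARD('n)\<close>] by auto
  qed
qed

lemma span_prefix_of_det:
  fixes v :: "nat \<Rightarrow> 'a::field^'n"
  assumes h: "bij_betw h (UNIV::'n set) {..<CARD('n)}" and "det (\<chi> j. v (h j)) \<noteq> 0"
  shows "vec.span {v i | i. i < CARD('n)} = UNIV"
proof -
  have "range (\<lambda>j. v (h j)) = v ` {..<CARD('n)}"
    using bij_betw_imp_surj_on[OF h] by (metis image_image)
  also have "\<dots> = {v i | i. i < CARD('n)}" by auto
  finally have "range (\<lambda>j. v (h j)) = {v i | i. i < CARD('n)}" .
  then show ?thesis using assms(2) det_rows_ne_0_iff_span by metis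
qed

lemma prefix_combination_as_rows:
  fixes M :: "'a::field^'n^'n"
  assumes \<pi>: "inj_on \<pi> {..<k}" and rows: "\<And>i. i < k \<Longrightarrow> M $ \<pi> i = v i"
  shows "(\<Sum>i<k. a i *s v i) =
    transpose M *v (\<chi> j. if j \<in> \<pi> ` {..<k} then a (the_inv_into {..<k} \<pi> j) else 0)"
proof -
  have "transpose M *v (\<chi> j. if j \<in> \<pi> ` {..<k} then a (the_inv_into {..<k} \<pi> j) else 0) =
      (\<Sum>j\<in>\<pi> ` {..<k}. a (the_inv_into {..<k} \<pi> j) *s M $ j)"
    unfolding matrix_mult_sum
    by (rule sum.mono_neutral_cong_right) (auto simp: row_def)
  also have "\<dots> = (\<Sum>i<k. a i *s v i)"
    using \<pi> rows by (simp add: sum.reindex the_inv_into_f_f)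
  finally show ?thesis by simp
qed

lemma independent_prefix_of_rows:
  fixes M :: "'a::field^'n^'n"
  assumes det: "det M \<noteq> 0" and \<pi>: "inj_on \<pi> {..<k}" and rows: "\<And>i. i < k \<Longrightarrow> M $ \<pi> i = v i"
  shows "independent_prefix k v"
  unfolding independent_prefix_def
proof (intro allI impI)
  fix a j assume "(\<Sum>i<k. a i *s v i) = 0" "j < k"
  let ?x = "\<chi> j. if j \<in> \<pi> ` {..<k} then a (the_inv_into {..<k} \<pi> j) else 0"
  have "transpose M *v ?x = transpose M *v 0"
    using \<open>(\<Sum>i<k. a i *s v i) = 0\<close> by (simp add: prefix_combination_as_rows[OF \<pi> rows])
  moreover have "det (transpose M) \<noteq> 0" using det by (simp add: det_transpose)
  ultimately have "?x = 0" using cramer_solution_unique by metis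
  then have "?x $ \<pi> j = 0" by simp
  then show "a j = 0" using \<open>j < k\<close> \<pi> by (simp add: the_inv_into_f_f)
qed

lemma prefix_coefficient_by_cramer:
  fixes M :: "'a::field^'n^'n"
  assumes det: "det M \<noteq> 0" and \<pi>: "inj_on \<pi> {..<k}" and rows: "\<And>i. i < k \<Longrightarrow> M $ \<pi> i = v i"
    and w: "(\<Sum>i<k. \<beta> i *s v i) = w" and "j < k"
  shows "\<beta> j = cramer_solution (transpose M) w $ \<pi> j"
proof -
  let ?x = "\<chi> j. if j \<in> \<pi> ` {..<k} then \<beta> (the_inv_into {..<k} \<pi> j) else 0"
  have "det (transpose M) \<noteq> 0" using det by (simp add: det_transpose)
  then have "?x = cramer_solution (transpose M) w"
    using w by (simp add: prefix_combination_as_rows[OF \<pi> rows] flip: cramer_solution_unique)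
  then have "?x $ \<pi> j = cramer_solution (transpose M) w $ \<pi> j" by simp
  then show ?thesis using \<open>j < k\<close> \<pi> by (simp add: the_inv_into_f_f)
qed

lemma independent_prefix_extends_to_basis:
  fixes v :: "nat \<Rightarrow> 'a::field^'n"
  assumes "independent_prefix k v"
  obtains \<sigma> :: "'n \<Rightarrow> 'a^'n" where "det (\<chi> j. \<sigma> j) \<noteq> 0" "\<And>i. i < k \<Longrightarrow> v i \<in> range \<sigma>"
proof -
  define B where "B = vec.extend_basis (v ` {..<k})"
  have B: "v ` {..<k} \<subseteq> B" "vec.independent B" "vec.span B = UNIV"
    using vec.extend_basis_superset vec.independent_extend_basis
      independent_prefix_imp_independent[OF assms]
    unfolding B_def by auto
  have "card B = CARD('n)"
    using vec.basis_card_eq_dim[of B UNIV] B by (simp add: card_cart_basis)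
  then obtain \<sigma> where \<sigma>: "bij_betw \<sigma> (UNIV::'n set) B"
    using finite_same_card_bij[of "UNIV::'n set" B] vec.finiteI_independent[OF B(2)] by auto
  then have "range \<sigma> = B" by (rule bij_betw_imp_surj_on)
  with B show ?thesis
    using that det_rows_ne_0_iff_span[of \<sigma>] by blast
qed

lemma holomorphic_frame_through_prefix:
  fixes f :: "nat \<Rightarrow> complex \<Rightarrow> complex^'n"
  assumes hol: "\<And>i j. i < k \<Longrightarrow> (\<lambda>t. f i t $ j) holomorphic_on S"
    and indep: "independent_prefix k (\<lambda>i. f i t1)"
  obtains M :: "complex \<Rightarrow> complex^'n^'n" and \<pi> :: "nat \<Rightarrow> 'n"
  where "\<And>r j. (\<lambda>t. M t $ r $ j) holomorphic_on S" "det (M t1) \<noteq> 0" "inj_on \<pi> {..<k}"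
    "\<And>t i. i < k \<Longrightarrow> M t $ \<pi> i = f i t"
proof -
  obtain \<sigma> where \<sigma>: "det (\<chi> j. \<sigma> j) \<noteq> 0" "\<And>i. i < k \<Longrightarrow> f i t1 \<in> range \<sigma>"
    using independent_prefix_extends_to_basis[OF indep] by blast
  define \<pi> where "\<pi> i = inv_into UNIV \<sigma> (f i t1)" for i
  have \<sigma>\<pi>: "\<sigma> (\<pi> i) = f i t1" if "i < k" for i
    unfolding \<pi>_def using \<sigma>(2)[OF that] by (rule f_inv_into_f)
  have "inj_on \<pi> {..<k}"
  proof (rule inj_onI)
    fix i j assume ij: "i \<in> {..<k}" "j \<in> {..<k}" "\<pi> i = \<pi> j"
    then have "f i t1 = f j t1" using \<sigma>\<pi> by (metis lessThan_iff)
    with independent_prefix_inj_on[OF indep] ij show "i = j" by (auto dest: inj_onD)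
  qed
  define M where "M t = (\<chi> j. if j \<in> \<pi> ` {..<k} then f (the_inv_into {..<k} \<pi> j) t else \<sigma> j)" for t
  have "M t $ \<pi> i = f i t" if "i < k" for t i
    using that \<open>inj_on \<pi> {..<k}\<close> by (simp add: M_def the_inv_into_f_f)
  moreover have "M t1 = (\<chi> j. \<sigma> j)"
    using \<sigma>\<pi> \<open>inj_on \<pi> {..<k}\<close> by (auto simp: M_def vec_eq_iff the_inv_into_f_f)
  moreover have "(\<lambda>t. M t $ r $ j) holomorphic_on S" for r j
    using hol the_inv_into_into[OF \<open>inj_on \<pi> {..<k}\<close>, of r] by (cases "r \<in> \<pi> ` {..<k}") (auto simp: M_def)
  ultimately show ?thesis using that \<open>inj_on \<pi> {..<k}\<close> \<sigma>(1) by metis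
qed

lemma holomorphic_combination_near:
  fixes f :: "nat \<Rightarrow> complex \<Rightarrow> complex^'n"
  assumes "open S" "t1 \<in> S"
    and hol: "\<And>i j. i \<le> k \<Longrightarrow> (\<lambda>t. f i t $ j) holomorphic_on S"
    and indep: "independent_prefix k (\<lambda>i. f i t1)"
    and dep: "\<And>t. t \<in> S \<Longrightarrow> \<not> independent_prefix (Suc k) (\<lambda>i. f i t)"
  shows "\<exists>\<rho>>0. ball t1 \<rho> \<subseteq> S \<and> (\<exists>c. (\<forall>i<k. c i holomorphic_on ball t1 \<rho>) \<and>
           (\<forall>t\<in>ball t1 \<rho>. f k t = (\<Sum>i<k. c i t *s f i t)))"
proof -
  obtain M \<pi> where M: "\<And>r j. (\<lambda>t. M t $ r $ j) holomorphic_on S" "det (M t1) \<noteq> 0"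
    "inj_on \<pi> {..<k}" "\<And>t i. i < k \<Longrightarrow> M t $ \<pi> i = f i t"
    using holomorphic_frame_through_prefix[of k f S t1] hol indep by auto
  have "continuous_on S (\<lambda>t. det (M t))"
    by (intro holomorphic_on_imp_continuous_on holomorphic_det M(1))
  then obtain e1 where e1: "e1 > 0" "\<And>t. dist t1 t < e1 \<Longrightarrow> det (M t) \<noteq> 0"
    using continuous_on_open_avoid[where f = "\<lambda>t. det (M t)", OF _ \<open>open S\<close> \<open>t1 \<in> S\<close> M(2)] by metis
  obtain e2 where e2: "e2 > 0" "ball t1 e2 \<subseteq> S"
    using \<open>open S\<close> \<open>t1 \<in> S\<close> open_contains_ball by blast
  define \<rho> where "\<rho> = min e1 e2"
  have \<rho>: "\<rho> > 0" "ball t1 \<rho> \<subseteq> S" "\<And>t. t \<in> ball t1 \<rho> \<Longrightarrow> det (M t) \<noteq> 0"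
    using e1 e2 by (auto simp: \<rho>_def)
  define c where "c i t = cramer_solution (transpose (M t)) (f k t) $ \<pi> i" for i t
  have "c i holomorphic_on ball t1 \<rho>" for i
  proof -
    have "(\<lambda>t. transpose (M t) $ r $ j) holomorphic_on ball t1 \<rho>" for r j
      using holomorphic_on_subset[OF M(1) \<rho>(2)] by (simp add: transpose_def)
    moreover have "(\<lambda>t. f k t $ j) holomorphic_on ball t1 \<rho>" for j
      using holomorphic_on_subset[OF hol[OF order_refl] \<rho>(2)] .
    ultimately show ?thesis
      unfolding c_def using \<rho>(3) by (intro holomorphic_cramer_solution) (auto simp: det_transpose)
  qed
  moreover have "f k t = (\<Sum>i<k. c i t *s f i t)" if t: "t \<in> ball t1 \<rho>" for t
  proof -
    have rows: "\<And>i. i < k \<Longrightarrow> M t $ \<pi> i = f i t" by (rule M(4))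
    obtain \<beta> where \<beta>: "f k t = (\<Sum>i<k. \<beta> i *s f i t)"
      using dependent_Suc_imp_combination[OF independent_prefix_of_rows[OF \<rho>(3)[OF t] M(3) rows]]
        dep t \<rho>(2) by blast
    moreover have "\<beta> j = c j t" if "j < k" for j
      unfolding c_def by (rule prefix_coefficient_by_cramer[OF \<rho>(3)[OF t] M(3) rows \<beta>[symmetric] that])
    ultimately show ?thesis by simp
  qed
  ultimately show ?thesis using \<rho>(1,2) by blast
qed

section \<open>Dual flat sections annihilating \<open>\<omega>\<close>\<close>

locale rational_connection =
  fixes A :: "complex \<Rightarrow> complex^'n^'n" and C :: "complex set" and \<omega> :: "complex \<Rightarrow> complex^'n"
  assumes finite_C: "finite C" and rational_A: "rational_mat_on (- C) A"
    and rational_\<omega>: "rational_vec_on (- C) \<omega>"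
begin

abbreviation nabla_pow :: "nat \<Rightarrow> complex \<Rightarrow> complex^'n" where
  "nabla_pow m \<equiv> (conn A ^^ m) \<omega>"

text \<open>Flat sections of the dual connection solve \<open>\<psi>' = A\<^sup>T \<psi>\<close>, so that
  \<open>\<langle>\<psi>, w\<rangle>' = \<langle>\<psi>, \<nabla>w\<rangle>\<close> for the bilinear pairing.\<close>

abbreviation dual_flat :: "complex set \<Rightarrow> (complex \<Rightarrow> complex^'n) \<Rightarrow> bool" where
  "dual_flat W \<psi> \<equiv> solves_ode (\<lambda>t. transpose (A t)) W \<psi>"

definition annihilator :: "complex set \<Rightarrow> (complex \<Rightarrow> complex^'n) \<Rightarrow> bool" where
  "annihilator W \<psi> \<longleftrightarrow> dual_flat W \<psi> \<and> (\<forall>t\<in>W. pairing (\<psi> t) (\<omega> t) = 0)"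

definition perp_nabla_pows :: "complex \<Rightarrow> complex^'n \<Rightarrow> bool" where
  "perp_nabla_pows t c \<longleftrightarrow> (\<forall>k. pairing c (nabla_pow k t) = 0)"

definition dual_solvable :: "complex set \<Rightarrow> bool" where
  "dual_solvable R \<longleftrightarrow> open R \<and> connected R \<and> R \<subseteq> - C \<and> ode_solvable_on (\<lambda>t. transpose (A t)) R"

lemma open_compl_C: "open (- C)"
  using finite_C by (simp add: finite_imp_closed open_Compl)

lemma connected_compl_C: "connected (- C)"
  using finite_C by (intro path_connected_imp_connected path_connected_complement_countable)
    (auto simp: countable_finite)

lemma holomorphic_transpose_A: "W \<subseteq> - C \<Longrightarrow> (\<lambda>t. transpose (A t) $ i $ j) holomorphic_on W"
  using rational_A rational_on_holomorphic[OF open_compl_C] holomorphic_on_subset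
  unfolding rational_mat_on_def transpose_def by fastforce

lemma rational_nabla_pow: "rational_vec_on (- C) (nabla_pow m)"
  by (rule rational_vec_on_conn_funpow[OF open_compl_C rational_A rational_\<omega>])

lemma holomorphic_nabla_pow: "W \<subseteq> - C \<Longrightarrow> (\<lambda>t. nabla_pow m t $ i) holomorphic_on W"
  using rational_nabla_pow[of m] rational_on_holomorphic[OF open_compl_C] holomorphic_on_subset
  unfolding rational_vec_on_def by blast

lemma dual_solvable_ball: "t \<in> - C \<Longrightarrow> \<exists>r>0. dual_solvable (ball t r)"
  using ode_solvable_near[OF open_compl_C holomorphic_transpose_A[OF order_refl]]
  unfolding dual_solvable_def by auto

lemma dual_flat_unique:
  assumes "open W" "connected W" "W \<subseteq> - C" "dual_flat W \<psi>" "dual_flat W \<phi>"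
    and "t1 \<in> W" "\<psi> t1 = \<phi> t1" "t \<in> W"
  shows "\<psi> t = \<phi> t"
  using solves_ode_unique[OF assms(1,2) holomorphic_transpose_A[OF assms(3)] assms(4-)] .

lemma pairing_dual_flat_has_derivative:
  assumes "dual_flat W \<psi>" "open W" "t \<in> W" and w: "\<And>i. (\<lambda>s. w s $ i) holomorphic_on W"
  shows "((\<lambda>s. pairing (\<psi> s) (w s)) has_field_derivative pairing (\<psi> t) (conn A w t)) (at t)"
proof -
  have "((\<lambda>s. \<psi> s $ i) has_field_derivative (\<Sum>j\<in>UNIV. A t $ j $ i * \<psi> t $ j)) (at t)" for i
    using assms(1,3) unfolding solves_ode_def by (simp add: matrix_vector_mult_def transpose_def)
  moreover have "((\<lambda>s. w s $ i) has_field_derivative deriv (\<lambda>s. w s $ i) t) (at t)" for i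
    using holomorphic_derivI[OF w \<open>open W\<close> \<open>t \<in> W\<close>] by (simp add: at_within_open[OF \<open>t \<in> W\<close> \<open>open W\<close>])
  ultimately have "((\<lambda>s. \<Sum>i\<in>UNIV. \<psi> s $ i * w s $ i) has_field_derivative
      (\<Sum>i\<in>UNIV. \<psi> t $ i * deriv (\<lambda>s. w s $ i) t + (\<Sum>j\<in>UNIV. A t $ j $ i * \<psi> t $ j) * w t $ i)) (at t)"
    by (intro DERIV_sum DERIV_mult')
  moreover have "(\<Sum>i\<in>UNIV. (\<Sum>j\<in>UNIV. A t $ j $ i * \<psi> t $ j) * w t $ i) =
      (\<Sum>j\<in>UNIV. \<psi> t $ j * (\<Sum>i\<in>UNIV. A t $ j $ i * w t $ i))"
  proof -
    have "(\<Sum>i\<in>UNIV. (\<Sum>j\<in>UNIV. A t $ j $ i * \<psi> t $ j) * w t $ i) =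
        (\<Sum>i\<in>UNIV. \<Sum>j\<in>UNIV. A t $ j $ i * \<psi> t $ j * w t $ i)"
      by (simp add: sum_distrib_right)
    also have "\<dots> = (\<Sum>j\<in>UNIV. \<Sum>i\<in>UNIV. A t $ j $ i * \<psi> t $ j * w t $ i)"
      by (rule sum.swap)
    also have "\<dots> = (\<Sum>j\<in>UNIV. \<psi> t $ j * (\<Sum>i\<in>UNIV. A t $ j $ i * w t $ i))"
      by (simp add: sum_distrib_left mult_ac)
    finally show ?thesis .
  qed
  ultimately show ?thesis
    by (simp only: pairing_def conn_component distrib_left sum.distrib)
qed

lemma annihilator_perp_nabla_pows:
  assumes "annihilator W \<psi>" "open W" "W \<subseteq> - C" "t \<in> W"
  shows "perp_nabla_pows t (\<psi> t)"
proof -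
  have "\<forall>t\<in>W. pairing (\<psi> t) (nabla_pow k t) = 0" for k
  proof (induction k)
    case 0
    then show ?case using assms(1) by (simp add: annihilator_def)
  next
    case (Suc k)
    show ?case
    proof
      fix t assume "t \<in> W"
      have "((\<lambda>s. pairing (\<psi> s) (nabla_pow k s)) has_field_derivative
          pairing (\<psi> t) (conn A (nabla_pow k) t)) (at t)"
        using assms(1) \<open>t \<in> W\<close> unfolding annihilator_def
        by (intro pairing_dual_flat_has_derivative[OF _ \<open>open W\<close>] holomorphic_nabla_pow[OF \<open>W \<subseteq> - C\<close>]) auto
      moreover have "((\<lambda>s. pairing (\<psi> s) (nabla_pow k s)) has_field_derivative 0) (at t)"
        by (rule has_field_derivative_transform_within_open[where f = "\<lambda>_. 0", OF _ \<open>open W\<close> \<open>t \<in> W\<close>])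
          (use Suc.IH in auto)
      ultimately show "pairing (\<psi> t) (nabla_pow (Suc k) t) = 0"
        using DERIV_unique by fastforce
    qed
  qed
  with \<open>t \<in> W\<close> show ?thesis unfolding perp_nabla_pows_def by blast
qed

text \<open>The \<open>k\<close>-th derivative of \<open>\<langle>\<psi>, \<omega>\<rangle>\<close> is \<open>\<langle>\<psi>, \<nabla>\<^sup>k\<omega>\<rangle>\<close>; conclude by the identity theorem.\<close>

lemma annihilator_of_perp_nabla_pows:
  assumes W: "open W" "connected W" "W \<subseteq> - C" and \<psi>: "dual_flat W \<psi>"
    and "b \<in> W" "perp_nabla_pows b (\<psi> b)"
  shows "annihilator W \<psi>"
proof -
  define g where "g s = pairing (\<psi> s) (\<omega> s)" for s
  have "\<forall>t\<in>W. (deriv ^^ k) g t = pairing (\<psi> t) (nabla_pow k t)" for k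
  proof (induction k)
    case (Suc k)
    show ?case
    proof
      fix t assume "t \<in> W"
      have "(deriv ^^ Suc k) g t = deriv (\<lambda>s. pairing (\<psi> s) (nabla_pow k s)) t"
        using Suc.IH eventually_nhds_in_open[OF W(1) \<open>t \<in> W\<close>]
        by (auto intro!: deriv_cong_ev elim!: eventually_mono)
      also have "\<dots> = pairing (\<psi> t) (nabla_pow (Suc k) t)"
        using \<psi> W \<open>t \<in> W\<close>
        by (simp add: DERIV_imp_deriv pairing_dual_flat_has_derivative holomorphic_nabla_pow)
      finally show "(deriv ^^ Suc k) g t = pairing (\<psi> t) (nabla_pow (Suc k) t)" .
    qed
  qed (simp add: g_def)
  then have "(deriv ^^ k) g b = 0" for k
    using \<open>b \<in> W\<close> \<open>perp_nabla_pows b (\<psi> b)\<close> unfolding perp_nabla_pows_def by simp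
  moreover have "g holomorphic_on W"
    unfolding g_def pairing_def
    using solves_ode_holomorphic[OF \<psi> W(1)] holomorphic_nabla_pow[OF W(3), of 0]
    by (auto intro!: holomorphic_intros)
  ultimately have "g t = 0" if "t \<in> W" for t
    using holomorphic_fun_eq_0_on_connected[OF _ W(1,2) _ \<open>b \<in> W\<close> that] by blast
  with \<psi> show ?thesis unfolding annihilator_def g_def by blast
qed

lemma perp_nabla_pows_iff_annihilator:
  assumes R: "dual_solvable R" and "x \<in> R"
  shows "perp_nabla_pows x c \<longleftrightarrow> (\<exists>\<phi>. annihilator R \<phi> \<and> \<phi> x = c)"
proof
  assume "perp_nabla_pows x c"
  moreover obtain \<phi> where "dual_flat R \<phi>" "\<phi> x = c"
    using R \<open>x \<in> R\<close> unfolding dual_solvable_def ode_solvable_on_def by blast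
  ultimately show "\<exists>\<phi>. annihilator R \<phi> \<and> \<phi> x = c"
    using R \<open>x \<in> R\<close> annihilator_of_perp_nabla_pows unfolding dual_solvable_def by blast
next
  assume "\<exists>\<phi>. annihilator R \<phi> \<and> \<phi> x = c"
  then show "perp_nabla_pows x c"
    using R \<open>x \<in> R\<close> annihilator_perp_nabla_pows unfolding dual_solvable_def by blast
qed

lemma dual_solvable_subset:
  assumes "dual_solvable R" "R' \<subseteq> R" "open R'" "connected R'"
  shows "dual_solvable R'"
  using assms ode_solvable_on_subset[of _ R R'] unfolding dual_solvable_def by auto

lemma proper_span_nabla_pows_propagates:
  assumes "b \<in> - C" "t \<in> - C" "vec.span {nabla_pow i b | i. True} \<noteq> UNIV"
  shows "vec.span {nabla_pow i t | i. True} \<noteq> UNIV"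
proof -
  have "(\<forall>v\<in>{nabla_pow i x | i. True}. pairing c v = 0) \<longleftrightarrow> perp_nabla_pows x c" for x c
    by (auto simp: perp_nabla_pows_def)
  then have span_iff: "vec.span {nabla_pow i x | i. True} \<noteq> UNIV \<longleftrightarrow> (\<exists>c. perp_nabla_pows x c \<and> c \<noteq> 0)"
    for x by (simp add: span_eq_UNIV_iff_no_annihilator)
  have "\<exists>c. perp_nabla_pows t c \<and> c \<noteq> 0"
  proof (rule connected_induction_simple[OF connected_compl_C \<open>b \<in> - C\<close> \<open>t \<in> - C\<close>])
    show "\<exists>c. perp_nabla_pows b c \<and> c \<noteq> 0" using assms(3) span_iff by simp
    fix a assume "a \<in> - C"
    then obtain r where "r > 0" and R: "dual_solvable (ball a r)" using dual_solvable_ball by blast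
    then have ball: "open (ball a r)" "connected (ball a r)" "ball a r \<subseteq> - C"
      unfolding dual_solvable_def by auto
    have step: "\<exists>c. perp_nabla_pows y c \<and> c \<noteq> 0"
      if "x \<in> ball a r" "y \<in> ball a r" and perp_x: "\<exists>c. perp_nabla_pows x c \<and> c \<noteq> 0" for x y
    proof -
      obtain \<phi> where \<phi>: "annihilator (ball a r) \<phi>" "\<phi> x \<noteq> 0"
        using perp_x unfolding perp_nabla_pows_iff_annihilator[OF R \<open>x \<in> ball a r\<close>] by blast
      have "\<phi> y \<noteq> 0"
      proof
        assume "\<phi> y = 0"
        moreover have "dual_flat (ball a r) \<phi>" using \<phi>(1) by (simp add: annihilator_def)
        ultimately have "\<phi> x = 0"
          by (rule dual_flat_unique[OF ball _ solves_ode_zero \<open>y \<in> ball a r\<close> _ \<open>x \<in> ball a r\<close>, rotated])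
        with \<phi>(2) show False by simp
      qed
      then show ?thesis
        unfolding perp_nabla_pows_iff_annihilator[OF R \<open>y \<in> ball a r\<close>] using \<phi>(1) by blast
    qed
    moreover have "openin (top_of_set (- C)) (ball a r)"
      using ball open_compl_C by (simp add: open_openin_trans)
    moreover have "a \<in> ball a r" using \<open>r > 0\<close> by simp
    ultimately show "\<exists>T. openin (top_of_set (- C)) T \<and> a \<in> T \<and>
        (\<forall>x\<in>T. \<forall>y\<in>T. (\<exists>c. perp_nabla_pows x c \<and> c \<noteq> 0) \<longrightarrow> (\<exists>c. perp_nabla_pows y c \<and> c \<noteq> 0))"
      by blast
  qed
  then show ?thesis using span_iff by simp
qed

lemma nabla_pows_not_all_zero:
  assumes "b \<in> - C" and "\<exists>t. t \<notin> C \<and> \<omega> t \<noteq> 0"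
  shows "\<exists>k. nabla_pow k b \<noteq> 0"
proof (rule ccontr)
  assume "\<nexists>k. nabla_pow k b \<noteq> 0"
  then have perp: "perp_nabla_pows b c" for c by (simp add: perp_nabla_pows_def)
  obtain r where "r > 0" and R: "dual_solvable (ball b r)"
    using dual_solvable_ball[OF \<open>b \<in> - C\<close>] by blast
  then have ball: "open (ball b r)" "connected (ball b r)" "ball b r \<subseteq> - C"
    unfolding dual_solvable_def by auto
  have pairing_zero: "pairing c (\<omega> t) = 0" if t: "t \<in> ball b r" for t c
  proof -
    obtain \<psi> where \<psi>: "dual_flat (ball b r) \<psi>" "\<psi> t = c"
      using R t unfolding dual_solvable_def ode_solvable_on_def by blast
    have "annihilator (ball b r) \<psi>"
      by (rule annihilator_of_perp_nabla_pows[OF ball \<psi>(1) _ perp]) (use \<open>r > 0\<close> in simp)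
    then show ?thesis
      using that \<psi>(2) unfolding annihilator_def by blast
  qed
  have zero_on_ball: "\<omega> t $ i = 0" if "t \<in> ball b r" for t i
    using pairing_zero[OF that, of "axis i 1"] pairing_axis[of "\<omega> t" i] pairing_commute[of "\<omega> t"]
    by metis
  obtain t where "t \<in> - C" "\<omega> t \<noteq> 0" using assms(2) by blast
  have "\<omega> t $ i = 0" for i
  proof (rule analytic_continuation_open[where f = "\<lambda>s. \<omega> s $ i" and g = "\<lambda>_. 0",
        OF ball(1) open_compl_C _ connected_compl_C ball(3) _ holomorphic_on_const zero_on_ball \<open>t \<in> - C\<close>])
    show "ball b r \<noteq> {}" using \<open>r > 0\<close> by simp
    show "(\<lambda>s. \<omega> s $ i) holomorphic_on - C"
      using holomorphic_nabla_pow[OF order_refl, of 0] by simp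
  qed
  with \<open>\<omega> t \<noteq> 0\<close> show False by (simp add: vec_eq_iff)
qed

lemma pairing_annihilator_flat_constant:
  assumes R: "open R" "convex R" and "annihilator R \<phi>" "flat_on A R y" "x \<in> R" "z \<in> R"
  shows "pairing (\<phi> x) (y x) = pairing (\<phi> z) (y z)"
proof -
  have "((\<lambda>s. pairing (\<phi> s) (y s)) has_field_derivative 0) (at t within R)" if "t \<in> R" for t
  proof -
    have "((\<lambda>s. pairing (\<phi> s) (y s)) has_field_derivative pairing (\<phi> t) (conn A y t)) (at t)"
      using assms(3,4) unfolding annihilator_def flat_on_def
      by (intro pairing_dual_flat_has_derivative[OF _ R(1) that]) auto
    moreover have "conn A y t = 0" using assms(4) that unfolding flat_on_def by blast
    ultimately show ?thesis by (simp add: has_field_derivative_at_within)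
  qed
  then obtain \<kappa> where "\<forall>t\<in>R. pairing (\<phi> t) (y t) = \<kappa>"
    using has_field_derivative_zero_constant[OF R(2)] by blast
  with assms(5,6) show ?thesis by simp
qed

text \<open>Locally along the path, \<open>Y\<close> is a flat section \<open>y\<close> and the vectors orthogonal to all
  \<open>\<nabla>\<^sup>k\<omega>\<close> are the values of the annihilators \<open>\<phi>\<close> on a small ball; since \<open>\<langle>\<phi>, y\<rangle>\<close> is constant,
  orthogonality of \<open>Y\<close> to these vectors is locally independent of the parameter.\<close>

lemma flat_along_orthogonality_locally_constant:
  assumes g: "path g" "path_image g \<subseteq> - C" and Y: "flat_along A C g Y" and "a \<in> {0..1}"
  shows "\<exists>T. openin (top_of_set {0..1}) T \<and> a \<in> T \<and>
    (\<forall>x\<in>T. \<forall>z\<in>T. (\<forall>c. perp_nabla_pows (g x) c \<longrightarrow> pairing c (Y x) = 0) \<longrightarrow>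
                   (\<forall>c. perp_nabla_pows (g z) c \<longrightarrow> pairing c (Y z) = 0))"
proof -
  obtain e y d where e: "e > 0" "ball (g a) e \<subseteq> - C" and y: "flat_on A (ball (g a) e) y"
    and "d > 0" and dY: "\<And>s. s \<in> {0..1} \<Longrightarrow> \<bar>s - a\<bar> < d \<Longrightarrow> g s \<in> ball (g a) e \<and> Y s = y (g s)"
    using Y \<open>a \<in> {0..1}\<close> unfolding flat_along_def by (elim ballE) blast+
  have "g a \<in> - C"
    using g(2) \<open>a \<in> {0..1}\<close> unfolding path_image_def by blast
  then obtain r where "r > 0" "dual_solvable (ball (g a) r)"
    using dual_solvable_ball by blast
  define \<rho> where "\<rho> = min r e"
  have R: "dual_solvable (ball (g a) \<rho>)"
    by (rule dual_solvable_subset[OF \<open>dual_solvable (ball (g a) r)\<close> _ open_ball connected_ball])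
      (simp add: \<rho>_def subset_ball)
  have "\<rho> > 0" using \<open>r > 0\<close> \<open>e > 0\<close> by (simp add: \<rho>_def)
  obtain d' where "d' > 0" and d': "\<And>s. s \<in> {0..1} \<Longrightarrow> dist s a < d' \<Longrightarrow> dist (g s) (g a) < \<rho>"
    using g(1) \<open>a \<in> {0..1}\<close> \<open>\<rho> > 0\<close> unfolding path_def continuous_on_iff by blast
  define T where "T = {0..1} \<inter> ball a (min d d')"
  have T: "g x \<in> ball (g a) \<rho> \<and> Y x = y (g x)" if "x \<in> T" for x
    using that d'[of x] dY[of x] by (auto simp: T_def dist_real_def dist_commute abs_minus_commute)
  have sub: "ball (g a) \<rho> \<subseteq> ball (g a) e" by (simp add: \<rho>_def subset_ball)
  have flat: "flat_on A (ball (g a) \<rho>) y"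
    using y holomorphic_on_subset[OF _ sub] sub unfolding flat_on_def by blast
  have const: "pairing (\<phi> (g x)) (y (g x)) = pairing (\<phi> (g a)) (y (g a))"
    if "annihilator (ball (g a) \<rho>) \<phi>" "x \<in> T" for \<phi> x
    by (rule pairing_annihilator_flat_constant[OF open_ball convex_ball that(1) flat])
      (use T[OF that(2)] \<open>\<rho> > 0\<close> in auto)
  have Q: "(\<forall>c. perp_nabla_pows (g x) c \<longrightarrow> pairing c (Y x) = 0) \<longleftrightarrow>
      (\<forall>\<phi>. annihilator (ball (g a) \<rho>) \<phi> \<longrightarrow> pairing (\<phi> (g a)) (y (g a)) = 0)" if "x \<in> T" for x
    using perp_nabla_pows_iff_annihilator[OF R] T[OF that] const[OF _ that] by auto
  have "openin (top_of_set {0..1}) T" "a \<in> T"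
    using \<open>a \<in> {0..1}\<close> \<open>d > 0\<close> \<open>d' > 0\<close> unfolding T_def by (auto intro: openin_open_Int)
  then show ?thesis
    by (intro exI[of _ T] conjI ballI impI) (use Q in blast)+
qed

lemma monodromy_orbit_subset_span_nabla_pows:
  assumes "b \<in> - C" "v \<in> vec.span {nabla_pow i b | i. True}"
  shows "monodromy_orbit A C b v \<subseteq> vec.span {nabla_pow i b | i. True}"
proof
  fix z assume "z \<in> monodromy_orbit A C b v"
  then obtain g Y where z: "z = Y 1" and g: "path g" "path_image g \<subseteq> - C" "g 0 = b" "g 1 = b"
    and Y: "flat_along A C g Y" "Y 0 = v"
    unfolding monodromy_orbit_def pathstart_def pathfinish_def by blast
  define Q where "Q s \<longleftrightarrow> (\<forall>c. perp_nabla_pows (g s) c \<longrightarrow> pairing c (Y s) = 0)" for s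
  have "Q 0"
    unfolding Q_def
  proof (intro allI impI)
    fix c assume "perp_nabla_pows (g 0) c"
    then have "\<And>u. u \<in> {nabla_pow i b | i. True} \<Longrightarrow> pairing c u = 0"
      unfolding g(3) perp_nabla_pows_def by blast
    then show "pairing c (Y 0) = 0"
      unfolding Y(2) using assms(2) by (rule pairing_vanishes_on_span)
  qed
  have "Q 1"
    by (rule connected_induction_simple[where P = Q, OF connected_Icc _ _ \<open>Q 0\<close>
          flat_along_orthogonality_locally_constant[OF g(1,2) Y(1), unfolded Q_def[symmetric]]]) auto
  show "z \<in> vec.span {nabla_pow i b | i. True}"
    unfolding z
  proof (rule in_span_if_annihilated)
    fix c assume "\<forall>v\<in>{nabla_pow i b | i. True}. pairing c v = 0"
    then have "perp_nabla_pows (g 1) c" unfolding g(4) perp_nabla_pows_def by blast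
    with \<open>Q 1\<close> show "pairing c (Y 1) = 0" unfolding Q_def by blast
  qed
qed

theorem span_nabla_pows_eq_UNIV:
  assumes irr: "irreducible_conn A C" and nz: "\<exists>t. t \<notin> C \<and> \<omega> t \<noteq> 0" and "b \<notin> C"
  shows "vec.span {nabla_pow i b | i. True} = UNIV"
proof (rule ccontr)
  assume "vec.span {nabla_pow i b | i. True} \<noteq> UNIV"
  obtain b0 where "b0 \<notin> C" and b0: "\<And>v. v \<noteq> 0 \<Longrightarrow> vec.span (monodromy_orbit A C b0 v) = UNIV"
    using irr unfolding irreducible_conn_def by blast
  have proper: "vec.span {nabla_pow i b0 | i. True} \<noteq> UNIV"
    by (rule proper_span_nabla_pows_propagates[of b])
      (use \<open>b \<notin> C\<close> \<open>b0 \<notin> C\<close> \<open>vec.span {nabla_pow i b | i. True} \<noteq> UNIV\<close> in auto)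
  obtain k where "nabla_pow k b0 \<noteq> 0"
    using nabla_pows_not_all_zero[of b0] \<open>b0 \<notin> C\<close> nz by auto
  have "nabla_pow k b0 \<in> vec.span {nabla_pow i b0 | i. True}"
    by (rule vec.span_base) blast
  then have "monodromy_orbit A C b0 (nabla_pow k b0) \<subseteq> vec.span {nabla_pow i b0 | i. True}"
    using \<open>b0 \<notin> C\<close> by (intro monodromy_orbit_subset_span_nabla_pows) auto
  then have "vec.span (monodromy_orbit A C b0 (nabla_pow k b0)) \<subseteq> vec.span {nabla_pow i b0 | i. True}"
    by (rule vec.span_minimal[OF _ vec.subspace_span])
  with b0[OF \<open>nabla_pow k b0 \<noteq> 0\<close>] proper show False by auto
qed

section \<open>Generic spanning by the first derivatives\<close>

definition holomorphic_combination :: "complex set \<Rightarrow> nat \<Rightarrow> (complex \<Rightarrow> complex^'n) \<Rightarrow> bool" where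
  "holomorphic_combination N k w \<longleftrightarrow>
     (\<exists>c. (\<forall>i<k. c i holomorphic_on N) \<and> (\<forall>t\<in>N. w t = (\<Sum>i<k. c i t *s nabla_pow i t)))"

lemma holomorphic_combination_cong:
  "holomorphic_combination N k w \<Longrightarrow> (\<And>t. t \<in> N \<Longrightarrow> w' t = w t) \<Longrightarrow> holomorphic_combination N k w'"
  unfolding holomorphic_combination_def by (elim exE) (intro exI, auto)

lemma holomorphic_combination_nabla_pow:
  assumes "i < k"
  shows "holomorphic_combination N k (nabla_pow i)"
proof -
  have "(\<Sum>l<k. (if l = i then 1 else 0) *s nabla_pow l t) = (\<Sum>l<k. if l = i then nabla_pow l t else 0)" for t
    by (rule sum.cong) auto
  then show ?thesis
    unfolding holomorphic_combination_def using assms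
    by (intro exI[of _ "\<lambda>l t. if l = i then 1 else 0"]) simp
qed

lemma holomorphic_combination_add:
  assumes "holomorphic_combination N k w" "holomorphic_combination N k w'"
  shows "holomorphic_combination N k (\<lambda>t. w t + w' t)"
proof -
  obtain c c' where c: "\<forall>i<k. c i holomorphic_on N" "\<forall>t\<in>N. w t = (\<Sum>i<k. c i t *s nabla_pow i t)"
    and c': "\<forall>i<k. c' i holomorphic_on N" "\<forall>t\<in>N. w' t = (\<Sum>i<k. c' i t *s nabla_pow i t)"
    using assms unfolding holomorphic_combination_def by blast
  show ?thesis
    unfolding holomorphic_combination_def
  proof (intro exI[of _ "\<lambda>i t. c i t + c' i t"] conjI allI impI ballI)
    show "(\<lambda>t. c i t + c' i t) holomorphic_on N" if "i < k" for i
      using c(1) c'(1) that by (auto intro: holomorphic_on_add)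
    show "w t + w' t = (\<Sum>i<k. (c i t + c' i t) *s nabla_pow i t)" if "t \<in> N" for t
      using c(2) c'(2) that by (simp add: vec.scale_left_distrib sum.distrib)
  qed
qed

lemma holomorphic_combination_sum_scale:
  assumes "finite I" "\<And>j. j \<in> I \<Longrightarrow> f j holomorphic_on N"
    and "\<And>j. j \<in> I \<Longrightarrow> holomorphic_combination N k (w j)"
  shows "holomorphic_combination N k (\<lambda>t. \<Sum>j\<in>I. f j t *s w j t)"
  using assms
proof (induction I rule: finite_induct)
  case empty
  then show ?case
    unfolding holomorphic_combination_def by (intro exI[of _ "\<lambda>_ _. 0"]) auto
next
  case (insert j I)
  obtain c where c: "\<forall>i<k. c i holomorphic_on N" "\<forall>t\<in>N. w j t = (\<Sum>i<k. c i t *s nabla_pow i t)"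
    using insert.prems(2) unfolding holomorphic_combination_def by blast
  have "holomorphic_combination N k (\<lambda>t. f j t *s w j t)"
    unfolding holomorphic_combination_def
  proof (intro exI[of _ "\<lambda>i t. f j t * c i t"] conjI allI impI ballI)
    show "(\<lambda>t. f j t * c i t) holomorphic_on N" if "i < k" for i
      using c(1) insert.prems(1) that by (auto intro: holomorphic_on_mult)
    show "f j t *s w j t = (\<Sum>i<k. (f j t * c i t) *s nabla_pow i t)" if "t \<in> N" for t
      using c(2) that by (simp add: vec.scale_sum_right vector_smult_assoc)
  qed
  moreover have "holomorphic_combination N k (\<lambda>t. \<Sum>j\<in>I. f j t *s w j t)"
    using insert by simp
  ultimately show ?case
    using holomorphic_combination_add insert.hyps by simp
qed

lemma holomorphic_combination_conn:
  assumes N: "open N" "N \<subseteq> - C" and w: "holomorphic_combination N k w"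
    and k: "holomorphic_combination N k (nabla_pow k)"
  shows "holomorphic_combination N k (conn A w)"
proof -
  obtain c where c: "\<forall>i<k. c i holomorphic_on N" "\<forall>t\<in>N. w t = (\<Sum>i<k. c i t *s nabla_pow i t)"
    using w unfolding holomorphic_combination_def by blast
  have "holomorphic_combination N k (\<lambda>t. \<Sum>i<k. deriv (c i) t *s nabla_pow i t)"
    using c(1) holomorphic_deriv[OF _ N(1)]
    by (intro holomorphic_combination_sum_scale holomorphic_combination_nabla_pow) auto
  moreover have "holomorphic_combination N k (nabla_pow (Suc i))" if "i < k" for i
    using that k holomorphic_combination_nabla_pow[of "Suc i" k] by (cases "Suc i = k") auto
  then have "holomorphic_combination N k (\<lambda>t. \<Sum>i<k. c i t *s nabla_pow (Suc i) t)"
    using c(1) by (intro holomorphic_combination_sum_scale) auto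
  ultimately have "holomorphic_combination N k
      (\<lambda>t. (\<Sum>i<k. deriv (c i) t *s nabla_pow i t) + (\<Sum>i<k. c i t *s nabla_pow (Suc i) t))"
    by (rule holomorphic_combination_add)
  moreover have "conn A w t = (\<Sum>i<k. deriv (c i) t *s nabla_pow i t) + (\<Sum>i<k. c i t *s nabla_pow (Suc i) t)"
    if "t \<in> N" for t
  proof -
    have "conn A w t = conn A (\<lambda>s. \<Sum>i<k. c i s *s nabla_pow i s) t"
      using c(2) by (intro conn_cong_open[OF N(1) that]) auto
    also have "\<dots> = (\<Sum>i<k. deriv (c i) t *s nabla_pow i t + c i t *s conn A (nabla_pow i) t)"
      by (rule conn_sum_scale[OF N(1) that finite_lessThan]) (use c(1) holomorphic_nabla_pow[OF N(2)] in auto)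
    finally show ?thesis by (simp add: sum.distrib)
  qed
  ultimately show ?thesis by (rule holomorphic_combination_cong)
qed

lemma nabla_pows_in_span_of_prefix:
  assumes "t1 \<in> - C" and indep: "independent_prefix k (\<lambda>i. nabla_pow i t1)"
    and dep: "\<And>t. t \<in> - C \<Longrightarrow> \<not> independent_prefix (Suc k) (\<lambda>i. nabla_pow i t)"
  shows "nabla_pow m t1 \<in> vec.span {nabla_pow i t1 | i. i < k}"
proof -
  have "\<And>i j. i \<le> k \<Longrightarrow> (\<lambda>t. nabla_pow i t $ j) holomorphic_on - C"
    by (rule holomorphic_nabla_pow) simp
  then obtain \<rho> where \<rho>: "\<rho> > 0" "ball t1 \<rho> \<subseteq> - C"
    and "holomorphic_combination (ball t1 \<rho>) k (nabla_pow k)"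
    using holomorphic_combination_near[where f = "\<lambda>i. (conn A ^^ i) \<omega>", OF open_compl_C \<open>t1 \<in> - C\<close> _ indep dep]
    unfolding holomorphic_combination_def by blast
  then have "holomorphic_combination (ball t1 \<rho>) k (nabla_pow m)"
  proof (induction m)
    case 0
    then show ?case
      using holomorphic_combination_nabla_pow[of 0 k] by (cases "k = 0") auto
  next
    case (Suc m)
    then show ?case
      using holomorphic_combination_conn[OF open_ball \<rho>(2)] by simp
  qed
  then obtain c where "nabla_pow m t1 = (\<Sum>i<k. c i t1 *s nabla_pow i t1)"
    unfolding holomorphic_combination_def using \<rho>(1) by force
  also have "\<dots> \<in> vec.span {nabla_pow i t1 | i. i < k}"
    by (intro vec.span_sum vec.span_scale vec.span_base) auto
  finally show ?thesis .
qed

lemma independent_prefix_somewhere: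
  assumes irr: "irreducible_conn A C" and nz: "\<exists>t. t \<notin> C \<and> \<omega> t \<noteq> 0"
  shows "\<exists>t\<in>- C. independent_prefix CARD('n) (\<lambda>i. nabla_pow i t)"
proof (rule ccontr)
  assume dep: "\<not> ?thesis"
  define K where "K = (LEAST m. \<forall>t\<in>- C. \<not> independent_prefix m (\<lambda>i. nabla_pow i t))"
  have "\<forall>t\<in>- C. \<not> independent_prefix CARD('n) (\<lambda>i. nabla_pow i t)"
    using dep by blast
  then have K: "\<forall>t\<in>- C. \<not> independent_prefix K (\<lambda>i. nabla_pow i t)" "K \<le> CARD('n)"
    unfolding K_def by (rule LeastI, rule Least_le)
  obtain t0 where "t0 \<in> - C" using nz by blast
  then have "K \<noteq> 0" using K(1) independent_prefix_0 by metis
  then obtain k where "K = Suc k" using not0_implies_Suc by blast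
  then have "\<not> (\<forall>t\<in>- C. \<not> independent_prefix k (\<lambda>i. nabla_pow i t))"
    unfolding K_def by (intro not_less_Least) simp
  then obtain t1 where t1: "t1 \<in> - C" "independent_prefix k (\<lambda>i. nabla_pow i t1)" by blast
  have "vec.span {nabla_pow i t1 | i. True} \<subseteq> vec.span {nabla_pow i t1 | i. i < k}"
    using nabla_pows_in_span_of_prefix[OF t1] K(1) \<open>K = Suc k\<close>
    by (intro vec.span_minimal vec.subspace_span) auto
  moreover have "vec.span {nabla_pow i t1 | i. True} = UNIV"
    using span_nabla_pows_eq_UNIV[OF irr nz] t1(1) by simp
  moreover have "{nabla_pow i t1 | i. i < k} = (\<lambda>i. nabla_pow i t1) ` {..<k}" by auto
  ultimately have "UNIV \<subseteq> vec.span ((\<lambda>i. nabla_pow i t1) ` {..<k})" by simp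
  then have "vec.dim (UNIV :: (complex^'n) set) \<le> card ((\<lambda>i. nabla_pow i t1) ` {..<k})"
    by (rule vec.dim_le_card) simp
  also have "\<dots> \<le> k" using card_image_le[of "{..<k}"] by simp
  finally show False using K(2) \<open>K = Suc k\<close> by (simp add: vec.dim_UNIV card_cart_basis)
qed

theorem generic_span_first_nabla_pows:
  assumes "irreducible_conn A C" "\<exists>t. t \<notin> C \<and> \<omega> t \<noteq> 0"
  shows "\<exists>F. finite F \<and> (\<forall>b. b \<notin> C \<union> F \<longrightarrow> vec.span {nabla_pow i b | i. i < CARD('n)} = UNIV)"
proof -
  obtain h :: "'n \<Rightarrow> nat" where h: "bij_betw h UNIV {..<CARD('n)}"
    using ex_bij_betw_finite_nat[of "UNIV :: 'n set"] by (auto simp: atLeast0LessThan)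
  define W where "W t = det (\<chi> j. nabla_pow (h j) t)" for t
  obtain t0 where "t0 \<in> - C" "W t0 \<noteq> 0"
    using independent_prefix_somewhere[OF assms] unfolding independent_prefix_iff_det[OF h] W_def by blast
  moreover have "rational_on (- C) W"
    unfolding W_def using rational_nabla_pow by (intro rational_on_det) (simp add: rational_vec_on_def)
  ultimately have "finite {t \<in> - C. W t = 0}"
    using rational_on_zeros_finite by blast
  moreover have "vec.span {nabla_pow i b | i. i < CARD('n)} = UNIV" if "b \<notin> C \<union> {t \<in> - C. W t = 0}" for b
    using that by (intro span_prefix_of_det[OF h]) (auto simp: W_def)
  ultimately show ?thesis by blast
qed

end

theorem proposition1:
  fixes C :: "complex set"
    and A :: "complex \<Rightarrow> complex^'n^'n"
    and \<omega> :: "complex \<Rightarrow> complex^'n"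
  assumes "finite C"
    and "rational_mat_on (- C) A"
    and "irreducible_conn A C"
    and "rational_vec_on (- C) \<omega>"
    and "\<exists>t. t \<notin> C \<and> \<omega> t \<noteq> 0"
  shows "(\<forall>b. b \<notin> C \<longrightarrow> vec.span {((conn A ^^ i) \<omega>) b | i. True} = UNIV)
       \<and> (\<exists>F. finite F \<and> (\<forall>b. b \<notin> C \<union> F \<longrightarrow>
              vec.span {((conn A ^^ i) \<omega>) b | i. i < CARD('n)} = UNIV))"
proof -
  interpret rational_connection A C \<omega>
    using assms(1,2,4) by unfold_locales
  show ?thesis
    using span_nabla_pows_eq_UNIV[OF assms(3,5)] generic_span_first_nabla_pows[OF assms(3,5)] by blast
qed

end
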